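(* Let $G=(V,E)$ be a rigid graph with $V=\{v_1,v_2,\ldots,v_n\}$ and $n\ge3$, and let $(G,p)$ be a quasi-generic complex realisation of $G$ with $p(v_1)=(0,0)$ and $p(v_2)=(0,y)$ for some $y\in\mathbb{C}$. Let $(G,q)$ be a complex realisation of $G$ equivalent to $(G,p)$ with $q(v_1)=(0,0)$ and $q(v_2)=(0,z)$ for some $z\in\mathbb{C}$. Then $\overline{\mathbb{Q}(p)}=\overline{\mathbb{Q}(q)}=\overline{\mathbb{Q}(d_G(p))}$ and $\operatorname{trdeg}[\mathbb{Q}(q):\mathbb{Q}]=2n-3$.
   Context: A complex realisation of a finite graph $G=(V,E)$ is a map $p:V\to\mathbb{C}^2$. For $P=(x,y)\in\mathbb{C}^2$ put $d(P)=x^2+y^2$. Realisations $(G,p),(G,q)$ are equivalent if $d(p(u)-p(v))=d(q(u)-q(v))$ for all $uv\in E$, and congruent if this holds for all $u,v\in V$. A realisation is generic if the set of all coordinates of the points $p(v)$ is algebraically independent over $\mathbb{Q}$, and quasi-generic if it is congruent to a generic realisation. The rigidity matrix $R(G,p)$ is the $|E|\times2|V|$ matrix whose row for edge $uv$ has $p(u)-p(v)$ in the columns of $u$, $p(v)-p(u)$ in the columns of $v$, zeros elsewhere; $G$ is rigid if $\operatorname{rank}R(G,p)=2|V|-3$ for a generic real realisation $p$. $\mathbb{Q}(p)$ denotes the field generated over $\mathbb{Q}$ by all coordinates of the points $p(v)$, $v\in V$; $d_G(p)=(d(p(u)-p(v)))_{uv\in E}\in\mathbb{C}^{|E|}$ and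 $\mathbb{Q}(d_G(p))$ is the field generated over $\mathbb{Q}$ by its entries; $\overline{K}$ is the algebraic closure of $K$, and $\operatorname{trdeg}$ denotes transcendence degree. *)

theory Defs
  imports Complex_Main "HOL-Library.Poly_Mapping" "HOL-Computational_Algebra.Polynomial"
    "HOL-Library.Extended_Nat"
begin

(* Multivariate polynomials over Q in variables indexed by 'i:
   finitely supported maps from monomials (finitely supported exponent maps) to rationals. *)
type_synonym 'i qpoly = "('i \<Rightarrow>\<^sub>0 nat) \<Rightarrow>\<^sub>0 rat"

definition eval_qpoly :: "('i \<Rightarrow> 'a::field_char_0) \<Rightarrow> 'i qpoly \<Rightarrow> 'a" where
  "eval_qpoly x P = (\<Sum>m\<in>Poly_Mapping.keys P. of_rat (Poly_Mapping.lookup P m) *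
      (\<Prod>i\<in>Poly_Mapping.keys (m :: 'i \<Rightarrow>\<^sub>0 nat). x i ^ Poly_Mapping.lookup m i))"

definition alg_indep :: "('i \<Rightarrow> 'a::field_char_0) \<Rightarrow> 'i set \<Rightarrow> bool" where
  "alg_indep x I \<longleftrightarrow>
     (\<forall>P :: 'i qpoly. (\<forall>m\<in>Poly_Mapping.keys P. Poly_Mapping.keys m \<subseteq> I) \<and> eval_qpoly x P = 0 \<longrightarrow> P = 0)"

definition alg_indep_set :: "complex set \<Rightarrow> bool" where
  "alg_indep_set B \<longleftrightarrow> alg_indep (\<lambda>z. z) B"

definition is_subfield :: "complex set \<Rightarrow> bool" where
  "is_subfield F \<longleftrightarrow> 0 \<in> F \<and> 1 \<in> F \<and> (\<forall>a\<in>F. \<forall>b\<in>F. a + b \<in> F \<and> a - b \<in> F \<and> a * b \<in> F)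
     \<and> (\<forall>a\<in>F. inverse a \<in> F)"

definition field_gen :: "complex set \<Rightarrow> complex set" where
  "field_gen S = \<Inter>{F. is_subfield F \<and> S \<subseteq> F}"

(* algebraic closure of a subfield K of C (taken inside C, which is algebraically closed) *)
definition alg_closure :: "complex set \<Rightarrow> complex set" where
  "alg_closure K = {z. \<exists>f :: complex poly. f \<noteq> 0 \<and> (\<forall>i. coeff f i \<in> K) \<and> poly f z = 0}"

definition trdeg :: "complex set \<Rightarrow> enat" where
  "trdeg K = (SUP B\<in>{B. finite B \<and> B \<subseteq> K \<and> alg_indep_set B}. enat (card B))"

definition dsq :: "complex \<times> complex \<Rightarrow> complex" where
  "dsq P = (fst P)\<^sup>2 + (snd P)\<^sup>2"

definition cdiff :: "complex \<times> complex \<Rightarrow> complex \<times> complex \<Rightarrow> complex \<times> complex" where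
  "cdiff P Q = (fst P - fst Q, snd P - snd Q)"

(* Graph G = (V,E): finite vertex set, edges as (oriented) pairs of distinct vertices *)
definition graph :: "'v set \<Rightarrow> ('v \<times> 'v) set \<Rightarrow> bool" where
  "graph V E \<longleftrightarrow> finite V \<and> E \<subseteq> V \<times> V \<and> (\<forall>(u,v)\<in>E. u \<noteq> v)"

(* coordinates of a realisation, indexed by (vertex, False = x / True = y) *)
definition coord :: "('v \<Rightarrow> 'a \<times> 'a) \<Rightarrow> 'v \<times> bool \<Rightarrow> 'a" where
  "coord p vi = (if snd vi then snd (p (fst vi)) else fst (p (fst vi)))"

definition generic :: "'v set \<Rightarrow> ('v \<Rightarrow> complex \<times> complex) \<Rightarrow> bool" where
  "generic V p \<longleftrightarrow> alg_indep (coord p) (V \<times> UNIV)"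

definition generic_real :: "'v set \<Rightarrow> ('v \<Rightarrow> real \<times> real) \<Rightarrow> bool" where
  "generic_real V p \<longleftrightarrow> alg_indep (coord p) (V \<times> UNIV)"

definition congruent_rlz :: "'v set \<Rightarrow> ('v \<Rightarrow> complex \<times> complex) \<Rightarrow> ('v \<Rightarrow> complex \<times> complex) \<Rightarrow> bool" where
  "congruent_rlz V p q \<longleftrightarrow> (\<forall>u\<in>V. \<forall>v\<in>V. dsq (cdiff (p u) (p v)) = dsq (cdiff (q u) (q v)))"

definition equivalent :: "('v \<times> 'v) set \<Rightarrow> ('v \<Rightarrow> complex \<times> complex) \<Rightarrow> ('v \<Rightarrow> complex \<times> complex) \<Rightarrow> bool" where
  "equivalent E p q \<longleftrightarrow> (\<forall>(u,v)\<in>E. dsq (cdiff (p u) (p v)) = dsq (cdiff (q u) (q v)))"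

definition quasi_generic :: "'v set \<Rightarrow> ('v \<Rightarrow> complex \<times> complex) \<Rightarrow> bool" where
  "quasi_generic V p \<longleftrightarrow> (\<exists>p0. generic V p0 \<and> congruent_rlz V p p0)"

(* row of the rigidity matrix for edge (u,v), as a function of the column index (w, coordinate) *)
definition rig_row :: "('v \<Rightarrow> real \<times> real) \<Rightarrow> 'v \<times> 'v \<Rightarrow> 'v \<times> bool \<Rightarrow> real" where
  "rig_row p e c = (let (u,v) = e; (w,i) = c in
      (if w = u then coord p (u,i) - coord p (v,i)
       else if w = v then coord p (v,i) - coord p (u,i) else 0))"

definition rig_rank :: "('v \<times> 'v) set \<Rightarrow> ('v \<Rightarrow> real \<times> real) \<Rightarrow> nat" where
  "rig_rank E p = Max {card F | F. F \<subseteq> E \<and>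
      (\<forall>c :: 'v \<times> 'v \<Rightarrow> real. (\<forall>x. (\<Sum>e\<in>F. c e * rig_row p e x) = 0) \<longrightarrow> (\<forall>e\<in>F. c e = 0))}"

definition rigid :: "'v set \<Rightarrow> ('v \<times> 'v) set \<Rightarrow> bool" where
  "rigid V E \<longleftrightarrow> (\<exists>p. generic_real V p \<and> rig_rank E p = 2 * card V - 3)"

definition coords :: "'v set \<Rightarrow> ('v \<Rightarrow> complex \<times> complex) \<Rightarrow> complex set" where
  "coords V p = coord p ` (V \<times> UNIV)"

definition dG :: "('v \<times> 'v) set \<Rightarrow> ('v \<Rightarrow> complex \<times> complex) \<Rightarrow> complex set" where
  "dG E p = (\<lambda>(u,v). dsq (cdiff (p u) (p v))) ` E"

end

theory Submission
  imports Defs "HOL-Algebra.Finite_Extensions"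
begin

text \<open>
  The squared edge lengths of a generic realisation along edges whose rows of the rigidity
  matrix are independent are algebraically independent: a relation of minimal degree among
  them, pulled back to the coordinates, vanishes identically, so differentiating it at a generic
  real realisation yields a linear dependence among those rows unless all partial derivatives of
  the relation vanish, which is impossible for a nonzero relation of minimal degree.  Rigidity
  supplies \<open>2n - 3\<close> such edges.  On the other hand a realisation with \<open>q(v\<^sub>1) = (0,0)\<close> and
  \<open>q(v\<^sub>2) = (0,z)\<close> has at most \<open>2n - 3\<close> nonzero coordinates, and a field generated by \<open>k\<close>
  elements contains no \<open>k + 1\<close> algebraically independent ones (more monomials of bounded degree
  than there is room for).  As the edge lengths of \<open>q\<close> coincide with those of \<open>p\<close> and lie in
  \<open>\<rat>(q)\<close>, they form a transcendence basis of \<open>\<rat>(q)\<close>, and the same holds for \<open>p\<close>.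
\<close>

subsection \<open>Polynomials over \<open>\<rat>\<close> in several variables\<close>

definition qmono :: "('i \<Rightarrow> 'a::field_char_0) \<Rightarrow> ('i \<Rightarrow>\<^sub>0 nat) \<Rightarrow> 'a" where
  "qmono x m = (\<Prod>i\<in>Poly_Mapping.keys m. x i ^ Poly_Mapping.lookup m i)"

lemma qmono_eq_prod_superset:
  assumes "finite A" "Poly_Mapping.keys m \<subseteq> A"
  shows "qmono x m = (\<Prod>i\<in>A. x i ^ Poly_Mapping.lookup m i)"
  unfolding qmono_def
  by (rule prod.mono_neutral_left[OF assms]) (auto simp: in_keys_iff)

lemma qmono_add: "qmono x (m + l) = qmono x m * qmono x l"
proof -
  let ?A = "Poly_Mapping.keys m \<union> Poly_Mapping.keys l"
  have f: "finite ?A" by simp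
  have "Poly_Mapping.keys (m + l) \<subseteq> ?A" by (simp add: keys_add)
  then have "qmono x (m + l) = (\<Prod>i\<in>?A. x i ^ Poly_Mapping.lookup (m + l) i)"
    by (rule qmono_eq_prod_superset[OF f])
  also have "\<dots> = (\<Prod>i\<in>?A. x i ^ Poly_Mapping.lookup m i) * (\<Prod>i\<in>?A. x i ^ Poly_Mapping.lookup l i)"
    by (simp add: lookup_add power_add prod.distrib)
  also have "\<dots> = qmono x m * qmono x l"
    using qmono_eq_prod_superset[OF f, of m x] qmono_eq_prod_superset[OF f, of l x] by auto
  finally show ?thesis .
qed

lemma qmono_zero [simp]: "qmono x 0 = 1"
  by (simp add: qmono_def)

lemma qmono_single [simp]: "qmono x (Poly_Mapping.single i k) = x i ^ k"
  by (simp add: qmono_def)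

lemma qmono_sum: "qmono x (sum h A) = (\<Prod>a\<in>A. qmono x (h a))"
  by (induction A rule: infinite_finite_induct) (auto simp: qmono_add)

lemma eval_qpoly_qmono:
  "eval_qpoly x P = (\<Sum>m\<in>Poly_Mapping.keys P. of_rat (Poly_Mapping.lookup P m) * qmono x m)"
  by (simp add: eval_qpoly_def qmono_def)

lemma eval_qpoly_eq_sum_superset:
  assumes "finite A" "Poly_Mapping.keys P \<subseteq> A"
  shows "eval_qpoly x P = (\<Sum>m\<in>A. of_rat (Poly_Mapping.lookup P m) * qmono x m)"
  unfolding eval_qpoly_qmono
  by (rule sum.mono_neutral_left[OF assms]) (auto simp: in_keys_iff)

lemma eval_qpoly_add: "eval_qpoly x (P + Q) = eval_qpoly x P + eval_qpoly x Q"
proof -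
  let ?A = "Poly_Mapping.keys P \<union> Poly_Mapping.keys Q"
  have f: "finite ?A" by simp
  have "eval_qpoly x (P + Q) = (\<Sum>m\<in>?A. of_rat (Poly_Mapping.lookup (P + Q) m) * qmono x m)"
    by (rule eval_qpoly_eq_sum_superset[OF f]) (simp add: keys_add)
  also have "\<dots> = (\<Sum>m\<in>?A. of_rat (Poly_Mapping.lookup P m) * qmono x m)
                + (\<Sum>m\<in>?A. of_rat (Poly_Mapping.lookup Q m) * qmono x m)"
    by (simp add: lookup_add of_rat_add distrib_right sum.distrib)
  also have "\<dots> = eval_qpoly x P + eval_qpoly x Q"
    using eval_qpoly_eq_sum_superset[OF f, of P x] eval_qpoly_eq_sum_superset[OF f, of Q x] by auto
  finally show ?thesis .
qed

lemma eval_qpoly_zero [simp]: "eval_qpoly x 0 = 0"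
  by (simp add: eval_qpoly_def)

lemma eval_qpoly_single [simp]: "eval_qpoly x (Poly_Mapping.single m c) = of_rat c * qmono x m"
  by (simp add: eval_qpoly_qmono)

lemma eval_qpoly_sum: "eval_qpoly x (sum f A) = (\<Sum>a\<in>A. eval_qpoly x (f a))"
  by (induction A rule: infinite_finite_induct) (auto simp: eval_qpoly_add)

lemma eval_qpoly_uminus: "eval_qpoly x (- P) = - eval_qpoly x P"
  using eval_qpoly_add[of x P "- P"] by (simp add: eq_neg_iff_add_eq_0 add.commute)

lemma eval_qpoly_diff: "eval_qpoly x (P - Q) = eval_qpoly x P - eval_qpoly x Q"
  using eval_qpoly_add[of x P "- Q"] eval_qpoly_uminus[of x Q] by simp

lemma qpoly_eq_sum_single:
  "P = (\<Sum>m\<in>Poly_Mapping.keys P. Poly_Mapping.single m (Poly_Mapping.lookup P m))"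
  by (rule poly_mapping_eqI)
    (auto simp: lookup_sum lookup_single when_def in_keys_iff sum.delta' intro: sum.neutral)

lemma eval_qpoly_mult: "eval_qpoly x (P * Q) = eval_qpoly x P * eval_qpoly x Q"
proof -
  have "P * Q = (\<Sum>m\<in>Poly_Mapping.keys P. Poly_Mapping.single m (Poly_Mapping.lookup P m)) *
                (\<Sum>l\<in>Poly_Mapping.keys Q. Poly_Mapping.single l (Poly_Mapping.lookup Q l))"
    using qpoly_eq_sum_single[of P] qpoly_eq_sum_single[of Q] by simp
  also have "\<dots> = (\<Sum>m\<in>Poly_Mapping.keys P. \<Sum>l\<in>Poly_Mapping.keys Q.
       Poly_Mapping.single (m + l) (Poly_Mapping.lookup P m * Poly_Mapping.lookup Q l))"
    by (simp add: sum_product mult_single)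
  finally have "eval_qpoly x (P * Q) = (\<Sum>m\<in>Poly_Mapping.keys P. \<Sum>l\<in>Poly_Mapping.keys Q.
       of_rat (Poly_Mapping.lookup P m) * qmono x m * (of_rat (Poly_Mapping.lookup Q l) * qmono x l))"
    by (simp add: eval_qpoly_sum qmono_add of_rat_mult ac_simps)
  also have "\<dots> = eval_qpoly x P * eval_qpoly x Q"
    by (simp add: eval_qpoly_qmono sum_product)
  finally show ?thesis .
qed

lemma eval_qpoly_one [simp]: "eval_qpoly x 1 = 1"
  by (simp add: eval_qpoly_qmono lookup_one when_def)

lemma eval_qpoly_power: "eval_qpoly x (P ^ k) = eval_qpoly x P ^ k"
  by (induction k) (auto simp: eval_qpoly_mult)

lemma eval_qpoly_prod: "eval_qpoly x (prod f A) = (\<Prod>a\<in>A. eval_qpoly x (f a))"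
  by (induction A rule: infinite_finite_induct) (auto simp: eval_qpoly_mult)

definition qvar :: "'i \<Rightarrow> 'i qpoly" where
  "qvar i = Poly_Mapping.single (Poly_Mapping.single i 1) 1"

definition qconst :: "rat \<Rightarrow> 'i qpoly" where
  "qconst c = Poly_Mapping.single 0 c"

lemma eval_qpoly_qvar [simp]: "eval_qpoly x (qvar i) = x i"
  by (simp add: qvar_def)

lemma eval_qpoly_qconst [simp]: "eval_qpoly x (qconst c) = of_rat c"
  by (simp add: qconst_def qmono_def)

definition qvars :: "'i qpoly \<Rightarrow> 'i set" where
  "qvars P = (\<Union>m\<in>Poly_Mapping.keys P. Poly_Mapping.keys m)"

lemma qvars_add: "qvars (P + Q) \<subseteq> qvars P \<union> qvars Q"
  using keys_add[of P Q] by (auto simp: qvars_def)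

lemma qvars_uminus [simp]: "qvars (- P) = qvars P"
  by (simp add: qvars_def keys_def)

lemma qvars_diff: "qvars (P - Q) \<subseteq> qvars P \<union> qvars Q"
  using qvars_add[of P "- Q"] by simp

lemma qvars_mult: "qvars (P * Q) \<subseteq> qvars P \<union> qvars Q"
proof
  fix i assume "i \<in> qvars (P * Q)"
  then obtain k where k: "k \<in> Poly_Mapping.keys (P * Q)" "i \<in> Poly_Mapping.keys k"
    by (auto simp: qvars_def)
  then obtain a b where "k = a + b" "a \<in> Poly_Mapping.keys P" "b \<in> Poly_Mapping.keys Q"
    using keys_mult[of P Q] by blast
  with k show "i \<in> qvars P \<union> qvars Q"
    using keys_add[of a b] by (auto simp: qvars_def)
qed

lemma qvars_zero [simp]: "qvars 0 = {}"
  by (simp add: qvars_def)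

lemma qvars_one [simp]: "qvars 1 = {}"
  by (simp add: qvars_def)

lemma qvars_power: "qvars (P ^ k) \<subseteq> qvars P"
  by (induction k) (use qvars_mult in fastforce)+

lemma qvars_sum: "qvars (sum f A) \<subseteq> (\<Union>a\<in>A. qvars (f a))"
  by (induction A rule: infinite_finite_induct) (use qvars_add in \<open>fastforce simp: qvars_def\<close>)+

lemma qvars_prod: "qvars (prod f A) \<subseteq> (\<Union>a\<in>A. qvars (f a))"
  by (induction A rule: infinite_finite_induct) (use qvars_mult in fastforce)+

lemma qvars_qvar [simp]: "qvars (qvar i) = {i}"
  by (simp add: qvars_def qvar_def)

lemma qvars_qconst: "qvars (qconst c) = {}"
  by (simp add: qvars_def qconst_def)

lemma qvars_single: "qvars (Poly_Mapping.single m c) \<subseteq> Poly_Mapping.keys m"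
  by (simp add: qvars_def)

lemma eval_qpoly_cong:
  assumes "\<And>i. i \<in> qvars P \<Longrightarrow> x i = y i"
  shows "eval_qpoly x P = eval_qpoly y P"
  unfolding eval_qpoly_def
  by (intro sum.cong refl arg_cong2[where f = "(*)"] prod.cong) (use assms in \<open>fastforce simp: qvars_def\<close>)

lemma alg_indep_eval_qpoly_eq_0:
  assumes "alg_indep x I" "qvars P \<subseteq> I" "eval_qpoly x P = 0"
  shows "P = 0"
  using assms unfolding alg_indep_def qvars_def by blast

definition qsubst :: "('i \<Rightarrow> 'j qpoly) \<Rightarrow> 'i qpoly \<Rightarrow> 'j qpoly" where
  "qsubst \<sigma> P = (\<Sum>m\<in>Poly_Mapping.keys P. qconst (Poly_Mapping.lookup P m) *
      (\<Prod>i\<in>Poly_Mapping.keys m. \<sigma> i ^ Poly_Mapping.lookup m i))"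

lemma eval_qpoly_qsubst: "eval_qpoly x (qsubst \<sigma> P) = eval_qpoly (\<lambda>i. eval_qpoly x (\<sigma> i)) P"
  unfolding qsubst_def eval_qpoly_sum eval_qpoly_mult eval_qpoly_prod eval_qpoly_power eval_qpoly_qconst
  by (simp add: eval_qpoly_def)

lemma qvars_qsubst: "qvars (qsubst \<sigma> P) \<subseteq> (\<Union>i\<in>qvars P. qvars (\<sigma> i))"
proof -
  have "qvars (qsubst \<sigma> P) \<subseteq> (\<Union>m\<in>Poly_Mapping.keys P. qvars (qconst (Poly_Mapping.lookup P m) *
      (\<Prod>i\<in>Poly_Mapping.keys m. \<sigma> i ^ Poly_Mapping.lookup m i)))"
    unfolding qsubst_def by (rule qvars_sum)
  also have "\<dots> \<subseteq> (\<Union>i\<in>qvars P. qvars (\<sigma> i))"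
  proof (rule UN_least)
    fix m assume m: "m \<in> Poly_Mapping.keys P"
    have "qvars (qconst (Poly_Mapping.lookup P m) * (\<Prod>i\<in>Poly_Mapping.keys m. \<sigma> i ^ Poly_Mapping.lookup m i))
       \<subseteq> qvars (\<Prod>i\<in>Poly_Mapping.keys m. \<sigma> i ^ Poly_Mapping.lookup m i)"
      using qvars_mult qvars_qconst by fastforce
    also have "\<dots> \<subseteq> (\<Union>i\<in>Poly_Mapping.keys m. qvars (\<sigma> i ^ Poly_Mapping.lookup m i))"
      by (rule qvars_prod)
    also have "\<dots> \<subseteq> (\<Union>i\<in>Poly_Mapping.keys m. qvars (\<sigma> i))"
      using qvars_power by fastforce
    also have "\<dots> \<subseteq> (\<Union>i\<in>qvars P. qvars (\<sigma> i))"
      using m by (auto simp: qvars_def)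
    finally show "qvars (qconst (Poly_Mapping.lookup P m) *
        (\<Prod>i\<in>Poly_Mapping.keys m. \<sigma> i ^ Poly_Mapping.lookup m i)) \<subseteq> (\<Union>i\<in>qvars P. qvars (\<sigma> i))" .
  qed
  finally show ?thesis .
qed

text \<open>A relation among polynomials evaluated at an algebraically independent family is a formal
  identity, so it persists under any other evaluation.\<close>

lemma alg_indep_qsubst_relation:
  fixes x :: "'i \<Rightarrow> 'a::field_char_0" and y :: "'i \<Rightarrow> 'b::field_char_0"
  assumes "alg_indep x I" and "\<And>z. z \<in> qvars P \<Longrightarrow> qvars (\<sigma> z) \<subseteq> I"
    and "eval_qpoly (\<lambda>z. eval_qpoly x (\<sigma> z)) P = 0"
  shows "eval_qpoly (\<lambda>z. eval_qpoly y (\<sigma> z)) P = 0"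
proof -
  have "qsubst \<sigma> P = 0"
    by (rule alg_indep_eval_qpoly_eq_0[OF assms(1)])
      (use qvars_qsubst[of \<sigma> P] assms(2,3) in \<open>auto simp: eval_qpoly_qsubst\<close>)
  then show ?thesis
    using eval_qpoly_qsubst[of y \<sigma> P] by simp
qed

subsection \<open>Generated subfields of \<open>\<complex>\<close>\<close>

lemma is_subfield_field_gen: "is_subfield (field_gen S)"
  unfolding field_gen_def is_subfield_def by blast

lemma field_gen_superset: "S \<subseteq> field_gen S"
  unfolding field_gen_def by blast

lemma field_gen_least: "is_subfield F \<Longrightarrow> S \<subseteq> F \<Longrightarrow> field_gen S \<subseteq> F"
  unfolding field_gen_def by blast

lemma field_gen_mono: "S \<subseteq> T \<Longrightarrow> field_gen S \<subseteq> field_gen T"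
  by (meson field_gen_least field_gen_superset order_trans is_subfield_field_gen)

context
  fixes F assumes F: "is_subfield F"
begin

lemma is_subfield_0: "0 \<in> F" and is_subfield_1: "1 \<in> F"
  using F by (auto simp: is_subfield_def)

lemma is_subfield_add: "a \<in> F \<Longrightarrow> b \<in> F \<Longrightarrow> a + b \<in> F"
  using F by (auto simp: is_subfield_def)

lemma is_subfield_diff: "a \<in> F \<Longrightarrow> b \<in> F \<Longrightarrow> a - b \<in> F"
  using F by (auto simp: is_subfield_def)

lemma is_subfield_mult: "a \<in> F \<Longrightarrow> b \<in> F \<Longrightarrow> a * b \<in> F"
  using F by (auto simp: is_subfield_def)

lemma is_subfield_inverse: "a \<in> F \<Longrightarrow> inverse a \<in> F"
  using F by (auto simp: is_subfield_def)

lemma is_subfield_divide: "a \<in> F \<Longrightarrow> b \<in> F \<Longrightarrow> a / b \<in> F"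
  by (simp add: divide_inverse is_subfield_inverse is_subfield_mult)

lemma is_subfield_uminus: "a \<in> F \<Longrightarrow> - a \<in> F"
  using is_subfield_diff[OF is_subfield_0] by fastforce

lemma is_subfield_power: "a \<in> F \<Longrightarrow> a ^ k \<in> F"
  by (induction k) (auto simp: is_subfield_1 is_subfield_mult)

lemma is_subfield_sum: "(\<And>x. x \<in> A \<Longrightarrow> f x \<in> F) \<Longrightarrow> sum f A \<in> F"
  by (induction A rule: infinite_finite_induct) (auto simp: is_subfield_0 is_subfield_add)

lemma is_subfield_prod: "(\<And>x. x \<in> A \<Longrightarrow> f x \<in> F) \<Longrightarrow> prod f A \<in> F"
  by (induction A rule: infinite_finite_induct) (auto simp: is_subfield_1 is_subfield_mult)

lemma is_subfield_of_nat: "of_nat k \<in> F"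
  by (induction k) (auto simp: is_subfield_0 is_subfield_1 is_subfield_add)

lemma is_subfield_of_int: "of_int k \<in> F"
proof (cases "k \<ge> 0")
  case True
  then show ?thesis using is_subfield_of_nat[of "nat k"] by simp
next
  case False
  then show ?thesis using is_subfield_uminus[OF is_subfield_of_nat[of "nat (- k)"]] by simp
qed

lemma is_subfield_of_rat: "of_rat q \<in> F"
  by (cases q) (simp add: of_rat_rat is_subfield_divide is_subfield_of_int)

lemma is_subfield_eval_qpoly: "(\<And>i. i \<in> qvars P \<Longrightarrow> x i \<in> F) \<Longrightarrow> eval_qpoly x P \<in> F"
  unfolding eval_qpoly_def
  by (rule is_subfield_sum, rule is_subfield_mult[OF is_subfield_of_rat], rule is_subfield_prod,
      rule is_subfield_power) (auto simp: qvars_def)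

end

lemma eval_qpoly_in_field_gen: "qvars P \<subseteq> S \<Longrightarrow> eval_qpoly (\<lambda>z. z) P \<in> field_gen S"
  using is_subfield_eval_qpoly[OF is_subfield_field_gen, of P "\<lambda>z. z" S] field_gen_superset[of S]
  by blast

definition poly_quotients :: "complex set \<Rightarrow> complex set" where
  "poly_quotients S = {eval_qpoly (\<lambda>z. z) P / eval_qpoly (\<lambda>z. z) Q | P Q.
       qvars P \<subseteq> S \<and> qvars Q \<subseteq> S \<and> eval_qpoly (\<lambda>z. z) Q \<noteq> 0}"

lemma is_subfield_poly_quotients: "is_subfield (poly_quotients S)"
proof -
  let ?e = "eval_qpoly (\<lambda>z::complex. z)"
  have 0: "0 \<in> poly_quotients S" unfolding poly_quotients_def
    by (rule CollectI, rule exI[of _ 0], rule exI[of _ 1]) simp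
  have 1: "1 \<in> poly_quotients S" unfolding poly_quotients_def
    by (rule CollectI, rule exI[of _ 1], rule exI[of _ 1]) simp
  have ops: "a + b \<in> poly_quotients S \<and> a - b \<in> poly_quotients S \<and> a * b \<in> poly_quotients S"
    if "a \<in> poly_quotients S" "b \<in> poly_quotients S" for a b
  proof -
    from that obtain P1 Q1 P2 Q2
      where a: "a = ?e P1 / ?e Q1" "qvars P1 \<subseteq> S" "qvars Q1 \<subseteq> S" "?e Q1 \<noteq> 0"
        and b: "b = ?e P2 / ?e Q2" "qvars P2 \<subseteq> S" "qvars Q2 \<subseteq> S" "?e Q2 \<noteq> 0"
      unfolding poly_quotients_def by blast
    have sums: "qvars (P1 * Q2) \<subseteq> S" "qvars (P2 * Q1) \<subseteq> S"
      using qvars_mult[of P1 Q2] qvars_mult[of P2 Q1] a b by auto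
    have den: "qvars (Q1 * Q2) \<subseteq> S" "?e (Q1 * Q2) \<noteq> 0"
      using qvars_mult[of Q1 Q2] a b by (auto simp: eval_qpoly_mult)
    have "a + b = ?e (P1 * Q2 + P2 * Q1) / ?e (Q1 * Q2)" "qvars (P1 * Q2 + P2 * Q1) \<subseteq> S"
      unfolding a(1) b(1) using a(4) b(4) qvars_add[of "P1 * Q2" "P2 * Q1"] sums
      by (auto simp: eval_qpoly_add eval_qpoly_mult field_simps)
    moreover have "a - b = ?e (P1 * Q2 - P2 * Q1) / ?e (Q1 * Q2)" "qvars (P1 * Q2 - P2 * Q1) \<subseteq> S"
      unfolding a(1) b(1) using a(4) b(4) qvars_diff[of "P1 * Q2" "P2 * Q1"] sums
      by (auto simp: eval_qpoly_diff eval_qpoly_mult field_simps)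
    moreover have "a * b = ?e (P1 * P2) / ?e (Q1 * Q2)" "qvars (P1 * P2) \<subseteq> S"
      unfolding a(1) b(1) using a(2,4) b(2,4) qvars_mult[of P1 P2]
      by (auto simp: eval_qpoly_mult)
    ultimately show ?thesis
      unfolding poly_quotients_def using den by blast
  qed
  have "inverse a \<in> poly_quotients S" if "a \<in> poly_quotients S" for a
  proof -
    from that obtain P Q where a: "a = ?e P / ?e Q" "qvars P \<subseteq> S" "qvars Q \<subseteq> S" "?e Q \<noteq> 0"
      unfolding poly_quotients_def by blast
    show ?thesis
    proof (cases "?e P = 0")
      case False
      then have "inverse a = ?e Q / ?e P" "?e P \<noteq> 0" using a by simp_all
      then show ?thesis unfolding poly_quotients_def using a by blast
    qed (use a 0 in simp)
  qed
  then show ?thesis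
    unfolding is_subfield_def using 0 1 ops by blast
qed

lemma field_gen_subset_poly_quotients: "field_gen S \<subseteq> poly_quotients S"
proof (rule field_gen_least[OF is_subfield_poly_quotients], rule subsetI)
  fix s assume "s \<in> S"
  then show "s \<in> poly_quotients S" unfolding poly_quotients_def
    by (intro CollectI exI[of _ "qvar s"] exI[of _ 1]) simp
qed

lemma field_gen_common_denominator:
  assumes "finite B" "B \<subseteq> field_gen S"
  obtains g f where "qvars g \<subseteq> S" "eval_qpoly (\<lambda>z. z) g \<noteq> 0"
    and "\<And>b. b \<in> B \<Longrightarrow> qvars (f b) \<subseteq> S" 
    and "\<And>b. b \<in> B \<Longrightarrow> eval_qpoly (\<lambda>z. z) (f b) = b * eval_qpoly (\<lambda>z. z) g"
proof -
  let ?e = "eval_qpoly (\<lambda>z::complex. z)"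
  have "\<exists>PQ. qvars (fst PQ) \<subseteq> S \<and> qvars (snd PQ) \<subseteq> S \<and> ?e (snd PQ) \<noteq> 0
      \<and> b * ?e (snd PQ) = ?e (fst PQ)" if "b \<in> B" for b
  proof -
    have "b \<in> poly_quotients S"
      using that assms(2) field_gen_subset_poly_quotients by blast
    then obtain P Q where "qvars P \<subseteq> S" "qvars Q \<subseteq> S" "?e Q \<noteq> 0" "b = ?e P / ?e Q"
      unfolding poly_quotients_def by blast
    then show ?thesis by (intro exI[of _ "(P, Q)"]) simp
  qed
  then obtain PQ where PQ: "\<And>b. b \<in> B \<Longrightarrow> qvars (fst (PQ b)) \<subseteq> S \<and> qvars (snd (PQ b)) \<subseteq> S
      \<and> ?e (snd (PQ b)) \<noteq> 0 \<and> b * ?e (snd (PQ b)) = ?e (fst (PQ b))"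
    by metis
  define g where "g = (\<Prod>b\<in>B. snd (PQ b))"
  define f where "f b = fst (PQ b) * (\<Prod>b'\<in>B - {b}. snd (PQ b'))" for b
  show ?thesis
  proof
    show "qvars g \<subseteq> S"
      unfolding g_def using qvars_prod[of "\<lambda>b. snd (PQ b)" B] PQ by blast
    show "?e g \<noteq> 0"
      unfolding g_def eval_qpoly_prod using PQ assms(1) by simp
  next
    fix b assume b: "b \<in> B"
    have "qvars (\<Prod>b'\<in>B - {b}. snd (PQ b')) \<subseteq> S"
      using qvars_prod[of "\<lambda>b. snd (PQ b)" "B - {b}"] PQ by blast
    then show "qvars (f b) \<subseteq> S"
      unfolding f_def using qvars_mult[of "fst (PQ b)" "\<Prod>b'\<in>B - {b}. snd (PQ b')"] PQ[OF b] by blast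
    have "?e g = ?e (snd (PQ b)) * (\<Prod>b'\<in>B - {b}. ?e (snd (PQ b')))"
      unfolding g_def eval_qpoly_prod using b assms(1) by (simp add: prod.remove)
    then show "?e (f b) = b * ?e g"
      unfolding f_def eval_qpoly_mult eval_qpoly_prod using PQ[OF b] by (simp add: ac_simps)
  qed
qed

subsection \<open>A field generated by \<open>k\<close> elements has transcendence degree at most \<open>k\<close>\<close>

lemma rat_vectors_dependent_if_card_gt:
  fixes v :: "'j \<Rightarrow> 'm \<Rightarrow> rat"
  assumes "finite A" "finite J" "card J > card A" "\<And>j a. j \<in> J \<Longrightarrow> a \<notin> A \<Longrightarrow> v j a = 0"
  shows "\<exists>c. (\<exists>j\<in>J. c j \<noteq> 0) \<and> (\<forall>a. (\<Sum>j\<in>J. c j * v j a) = 0)"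
  using assms
proof (induction A arbitrary: J v rule: finite_induct)
  case empty
  then obtain j0 where "j0 \<in> J" by (metis card.empty card_gt_0_iff ex_in_conv)
  then show ?case using empty by (intro exI[of _ "\<lambda>_. 1"]) auto
next
  case (insert a A)
  show ?case
  proof (cases "\<forall>j\<in>J. v j a = 0")
    case True
    have "v j b = 0" if "j \<in> J" "b \<notin> A" for j b
      using True insert.prems(3) that by (cases "b = a") auto
    then show ?thesis by (intro insert.IH) (use insert in auto)
  next
    case False
    then obtain k where k: "k \<in> J" "v k a \<noteq> 0" by blast
    text \<open>Gaussian elimination of the coordinate \<open>a\<close> using the vector \<open>v k\<close>.\<close>
    define w where "w j b = v j b - (v j a / v k a) * v k b" for j b
    have "\<exists>c. (\<exists>j\<in>J - {k}. c j \<noteq> 0) \<and> (\<forall>b. (\<Sum>j\<in>J - {k}. c j * w j b) = 0)"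
    proof (rule insert.IH)
      show "finite (J - {k})" "card A < card (J - {k})" using insert k by auto
      fix j b assume "j \<in> J - {k}" "b \<notin> A"
      then show "w j b = 0" using insert k by (cases "b = a") (auto simp: w_def)
    qed
    then obtain c where c: "\<exists>j\<in>J - {k}. c j \<noteq> 0" "\<And>b. (\<Sum>j\<in>J - {k}. c j * w j b) = 0"
      by blast
    define c' where "c' j = (if j = k then - (\<Sum>i\<in>J - {k}. c i * (v i a / v k a)) else c j)" for j
    have "(\<Sum>j\<in>J. c' j * v j b) = 0" for b
    proof -
      have "(\<Sum>j\<in>J. c' j * v j b) = c' k * v k b + (\<Sum>j\<in>J - {k}. c' j * v j b)"
        using insert k by (simp add: sum.remove)
      also have "(\<Sum>j\<in>J - {k}. c' j * v j b)
          = (\<Sum>j\<in>J - {k}. c j * w j b + c j * (v j a / v k a) * v k b)"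
        by (rule sum.cong) (auto simp: c'_def w_def algebra_simps)
      also have "\<dots> = (\<Sum>j\<in>J - {k}. c j * w j b) + (\<Sum>j\<in>J - {k}. c j * (v j a / v k a)) * v k b"
        by (simp add: sum.distrib sum_distrib_right)
      finally show ?thesis using c(2)[of b] by (simp add: c'_def)
    qed
    moreover have "\<exists>j\<in>J. c' j \<noteq> 0" using c(1) by (auto simp: c'_def)
    ultimately show ?thesis by blast
  qed
qed

lemma qpolys_dependent_if_card_gt:
  assumes "finite Mon" "finite J" "card Mon < card J" "\<And>j. j \<in> J \<Longrightarrow> Poly_Mapping.keys (R j) \<subseteq> Mon"
  obtains c where "\<exists>j\<in>J. c j \<noteq> 0" and "\<And>x. (\<Sum>j\<in>J. of_rat (c j) * eval_qpoly x (R j)) = 0"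
proof -
  have "Poly_Mapping.lookup (R j) mo = 0" if "j \<in> J" "mo \<notin> Mon" for j mo
    using assms(4) that by (meson in_keys_iff subsetD)
  then obtain c where c: "\<exists>j\<in>J. c j \<noteq> 0" "\<And>mo. (\<Sum>j\<in>J. c j * Poly_Mapping.lookup (R j) mo) = 0"
    using rat_vectors_dependent_if_card_gt[of Mon J "\<lambda>j mo. Poly_Mapping.lookup (R j) mo"] assms(1-3)
    by blast
  have "(\<Sum>j\<in>J. of_rat (c j) * eval_qpoly x (R j)) = 0" for x
  proof -
    have "(\<Sum>j\<in>J. of_rat (c j) * eval_qpoly x (R j))
        = (\<Sum>j\<in>J. \<Sum>mo\<in>Mon. of_rat (c j) * (of_rat (Poly_Mapping.lookup (R j) mo) * qmono x mo))"
      by (rule sum.cong[OF refl])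
        (simp add: eval_qpoly_eq_sum_superset[OF assms(1,4)] sum_distrib_left)
    also have "\<dots> = (\<Sum>mo\<in>Mon. of_rat (\<Sum>j\<in>J. c j * Poly_Mapping.lookup (R j) mo) * qmono x mo)"
      by (subst sum.swap) (simp add: of_rat_sum of_rat_mult sum_distrib_right mult.assoc)
    finally show ?thesis using c(2) by simp
  qed
  with c(1) show ?thesis using that by blast
qed

definition mdeg :: "('i \<Rightarrow>\<^sub>0 nat) \<Rightarrow> nat" where
  "mdeg m = sum (Poly_Mapping.lookup m) (Poly_Mapping.keys m)"

lemma mdeg_eq_sum_superset:
  "finite A \<Longrightarrow> Poly_Mapping.keys m \<subseteq> A \<Longrightarrow> mdeg m = sum (Poly_Mapping.lookup m) A"
  unfolding mdeg_def by (rule sum.mono_neutral_left) (auto simp: in_keys_iff)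

lemma mdeg_add: "mdeg (a + b) = mdeg a + mdeg b"
proof -
  let ?A = "Poly_Mapping.keys a \<union> Poly_Mapping.keys b"
  have "mdeg (a + b) = sum (Poly_Mapping.lookup (a + b)) ?A"
    by (rule mdeg_eq_sum_superset) (auto simp: keys_add)
  also have "\<dots> = sum (Poly_Mapping.lookup a) ?A + sum (Poly_Mapping.lookup b) ?A"
    by (simp add: lookup_add sum.distrib)
  also have "\<dots> = mdeg a + mdeg b"
    using mdeg_eq_sum_superset[of ?A a] mdeg_eq_sum_superset[of ?A b] by simp
  finally show ?thesis .
qed

lemma lookup_le_mdeg: "Poly_Mapping.lookup m i \<le> mdeg m"
proof (cases "i \<in> Poly_Mapping.keys m")
  case True then show ?thesis unfolding mdeg_def by (rule member_le_sum) auto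
qed (simp add: in_keys_iff)

definition tdeg :: "'i qpoly \<Rightarrow> nat" where
  "tdeg P = Max (insert 0 (mdeg ` Poly_Mapping.keys P))"

lemma tdeg_le_iff: "tdeg P \<le> d \<longleftrightarrow> (\<forall>m\<in>Poly_Mapping.keys P. mdeg m \<le> d)"
  unfolding tdeg_def by simp

lemma mdeg_le_tdeg: "m \<in> Poly_Mapping.keys P \<Longrightarrow> mdeg m \<le> tdeg P"
  using tdeg_le_iff by blast

lemma tdeg_mult: "tdeg (P * Q) \<le> tdeg P + tdeg Q"
  unfolding tdeg_le_iff
proof
  fix k assume "k \<in> Poly_Mapping.keys (P * Q)"
  then obtain a b where "k = a + b" "a \<in> Poly_Mapping.keys P" "b \<in> Poly_Mapping.keys Q"
    using keys_mult[of P Q] by blast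
  then show "mdeg k \<le> tdeg P + tdeg Q" by (simp add: mdeg_add add_mono mdeg_le_tdeg)
qed

lemma tdeg_one [simp]: "tdeg (1 :: 'i qpoly) = 0"
  by (simp add: tdeg_def mdeg_def)

lemma tdeg_power: "tdeg (P ^ k) \<le> k * tdeg P"
proof (induction k)
  case (Suc k)
  have "tdeg (P ^ Suc k) \<le> tdeg P + tdeg (P ^ k)" using tdeg_mult[of P "P ^ k"] by simp
  also have "\<dots> \<le> Suc k * tdeg P" using Suc by simp
  finally show ?case .
qed simp

lemma tdeg_prod: "tdeg (prod f A) \<le> (\<Sum>a\<in>A. tdeg (f a))"
proof (induction A rule: infinite_finite_induct)
  case (insert a A)
  have "tdeg (prod f (insert a A)) \<le> tdeg (f a) + tdeg (prod f A)"
    using insert tdeg_mult[of "f a" "prod f A"] by simp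
  also have "\<dots> \<le> (\<Sum>a\<in>insert a A. tdeg (f a))" using insert by simp
  finally show ?case .
qed simp_all

lemma card_bounded_monomials:
  fixes S :: "'i set" and N :: nat
  assumes "finite S"
  defines "Mon \<equiv> {mo. Poly_Mapping.keys mo \<subseteq> S \<and> (\<forall>i. Poly_Mapping.lookup mo i \<le> N)}"
  shows "finite Mon" and "card Mon \<le> (N + 1) ^ card S"
proof -
  let ?r = "\<lambda>mo. restrict (Poly_Mapping.lookup mo) S"
  have inj: "inj_on ?r Mon"
  proof (rule inj_onI, rule poly_mapping_eqI)
    fix a b i assume ab: "a \<in> Mon" "b \<in> Mon" "?r a = ?r b"
    show "Poly_Mapping.lookup a i = Poly_Mapping.lookup b i"
    proof (cases "i \<in> S")
      case True then show ?thesis using ab(3) by (metis restrict_apply')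
    next
      case False
      then have "i \<notin> Poly_Mapping.keys a" "i \<notin> Poly_Mapping.keys b"
        using ab(1,2) by (auto simp: Mon_def)
      then show ?thesis by (simp add: in_keys_iff)
    qed
  qed
  have im: "?r ` Mon \<subseteq> PiE S (\<lambda>_. {..N})" by (auto simp: Mon_def)
  have fin: "finite (PiE S (\<lambda>_. {..N}))" by (rule finite_PiE) (use assms in auto)
  show "finite Mon" using inj_on_finite[OF inj im fin] .
  have "card Mon \<le> card (PiE S (\<lambda>_. {..N}))" by (rule card_inj_on_le[OF inj im fin])
  also have "\<dots> = (N + 1) ^ card S" using assms by (simp add: card_PiE)
  finally show "card Mon \<le> (N + 1) ^ card S" .
qed

lemma alg_indep_set_monomials_lin_indep:
  assumes "alg_indep_set B" "finite B" "finite A" "A \<subseteq> PiE B (\<lambda>_. UNIV)"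
    and "(\<Sum>\<alpha>\<in>A. of_rat (c \<alpha>) * (\<Prod>b\<in>B. b ^ \<alpha> b)) = 0" and "\<alpha>0 \<in> A"
  shows "c \<alpha>0 = 0"
proof -
  define mon where "mon \<alpha> = (\<Sum>b\<in>B. Poly_Mapping.single b (\<alpha> b))" for \<alpha> :: "complex \<Rightarrow> nat"
  have lmon: "Poly_Mapping.lookup (mon \<alpha>) b = (if b \<in> B then \<alpha> b else 0)" for \<alpha> b
    unfolding mon_def lookup_sum by (simp add: lookup_single when_def assms(2))
  have inj: "inj_on mon A"
  proof (rule inj_onI)
    fix \<alpha> \<beta> assume ab: "\<alpha> \<in> A" "\<beta> \<in> A" "mon \<alpha> = mon \<beta>"
    show "\<alpha> = \<beta>"
    proof (rule PiE_ext)
      show "\<alpha> \<in> B \<rightarrow>\<^sub>E UNIV" "\<beta> \<in> B \<rightarrow>\<^sub>E UNIV" using ab(1,2) assms(4) by auto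
      fix b assume "b \<in> B"
      then show "\<alpha> b = \<beta> b" using lmon[of \<alpha> b] lmon[of \<beta> b] ab(3) by simp
    qed
  qed
  define T where "T = (\<Sum>\<alpha>\<in>A. Poly_Mapping.single (mon \<alpha>) (c \<alpha>))"
  have "eval_qpoly (\<lambda>z. z) T = (\<Sum>\<alpha>\<in>A. of_rat (c \<alpha>) * (\<Prod>b\<in>B. b ^ \<alpha> b))"
    unfolding T_def eval_qpoly_sum mon_def by (simp add: qmono_sum)
  moreover have "qvars T \<subseteq> B"
  proof -
    have "qvars T \<subseteq> (\<Union>\<alpha>\<in>A. qvars (Poly_Mapping.single (mon \<alpha>) (c \<alpha>)))"
      unfolding T_def by (rule qvars_sum)
    also have "\<dots> \<subseteq> (\<Union>\<alpha>\<in>A. Poly_Mapping.keys (mon \<alpha>))"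
      by (intro UN_mono order_refl qvars_single)
    also have "\<dots> \<subseteq> B"
      by (auto simp: in_keys_iff lmon split: if_splits)
    finally show ?thesis .
  qed
  ultimately have "T = 0"
    using alg_indep_eval_qpoly_eq_0[OF assms(1)[unfolded alg_indep_set_def]] assms(5) by simp
  moreover have "Poly_Mapping.lookup T (mon \<alpha>0) = c \<alpha>0"
  proof -
    have "Poly_Mapping.lookup T (mon \<alpha>0) = (\<Sum>\<alpha>\<in>A. if \<alpha> = \<alpha>0 then c \<alpha> else 0)"
      unfolding T_def lookup_sum
      by (rule sum.cong[OF refl]) (use inj_on_eq_iff[OF inj _ assms(6)] in \<open>simp add: lookup_single when_def\<close>)
    then show ?thesis using assms(3,6) by simp
  qed
  ultimately show ?thesis by simp
qed

lemma power_counting_inequality: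
  fixes m k D :: nat
  assumes "k < m"
  defines "M \<equiv> (m * D + 1) ^ k"
  shows "(m * M * D + 1) ^ k < (M + 1) ^ m"
proof -
  have "(m * M * D + 1) ^ k \<le> ((m * D + 1) * (M + 1)) ^ k"
    by (rule power_mono) (simp_all add: algebra_simps)
  also have "\<dots> = M * (M + 1) ^ k"
    unfolding power_mult_distrib M_def ..
  also have "\<dots> < (M + 1) ^ Suc k" by simp
  also have "\<dots> \<le> (M + 1) ^ m" by (rule power_increasing) (use assms in auto)
  finally show ?thesis .
qed

text \<open>When \<open>f b / g = b\<close> for \<open>b \<in> B\<close>, this is the monomial \<open>\<Prod>b\<in>B. b ^ \<alpha> b\<close> of degree at
  most \<open>K\<close>, multiplied by the common denominator \<open>g ^ K\<close>.\<close>

definition cleared_monomial :: "('b \<Rightarrow> 'i qpoly) \<Rightarrow> 'i qpoly \<Rightarrow> 'b set \<Rightarrow> nat \<Rightarrow> ('b \<Rightarrow> nat) \<Rightarrow> 'i qpoly"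
  where "cleared_monomial f g B K \<alpha> = (\<Prod>b\<in>B. f b ^ \<alpha> b) * g ^ (K - (\<Sum>b\<in>B. \<alpha> b))"

lemma keys_cleared_monomial:
  assumes "\<And>b. b \<in> B \<Longrightarrow> qvars (f b) \<subseteq> S" "\<And>b. b \<in> B \<Longrightarrow> tdeg (f b) \<le> D"
    and "qvars g \<subseteq> S" "tdeg g \<le> D" and "(\<Sum>b\<in>B. \<alpha> b) \<le> K"
    and mo: "mo \<in> Poly_Mapping.keys (cleared_monomial f g B K \<alpha>)"
  shows "Poly_Mapping.keys mo \<subseteq> S" and "Poly_Mapping.lookup mo i \<le> K * D"
proof -
  let ?F = "\<Prod>b\<in>B. f b ^ \<alpha> b" and ?G = "g ^ (K - (\<Sum>b\<in>B. \<alpha> b))"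
  have "qvars (f b ^ \<alpha> b) \<subseteq> S" if "b \<in> B" for b
    using qvars_power[of "f b" "\<alpha> b"] assms(1)[OF that] by blast
  then have "qvars ?F \<subseteq> S"
    using qvars_prod[of "\<lambda>b. f b ^ \<alpha> b" B] by blast
  moreover have "qvars ?G \<subseteq> S"
    using qvars_power[of g] assms(3) by blast
  ultimately have "qvars (cleared_monomial f g B K \<alpha>) \<subseteq> S"
    unfolding cleared_monomial_def using qvars_mult[of ?F ?G] by blast
  then show "Poly_Mapping.keys mo \<subseteq> S"
    using mo by (auto simp: qvars_def)
  have "tdeg ?F \<le> (\<Sum>b\<in>B. tdeg (f b ^ \<alpha> b))"
    by (rule tdeg_prod)
  also have "\<dots> \<le> (\<Sum>b\<in>B. \<alpha> b * D)"
    by (rule sum_mono) (meson assms(2) le_trans mult_le_mono2 tdeg_power)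
  finally have "tdeg ?F \<le> (\<Sum>b\<in>B. \<alpha> b) * D"
    by (simp add: sum_distrib_right)
  moreover have "tdeg ?G \<le> (K - (\<Sum>b\<in>B. \<alpha> b)) * D"
    by (meson assms(4) le_trans mult_le_mono2 tdeg_power)
  moreover have "(\<Sum>b\<in>B. \<alpha> b) * D + (K - (\<Sum>b\<in>B. \<alpha> b)) * D = K * D"
    using assms(5) by (simp add: add_mult_distrib[symmetric])
  ultimately have "tdeg (cleared_monomial f g B K \<alpha>) \<le> K * D"
    unfolding cleared_monomial_def using tdeg_mult[of ?F ?G] by linarith
  then show "Poly_Mapping.lookup mo i \<le> K * D"
    using lookup_le_mdeg[of mo i] mdeg_le_tdeg[OF mo] by linarith
qed

lemma eval_cleared_monomial:
  fixes f :: "complex \<Rightarrow> complex qpoly" and g :: "complex qpoly"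
  assumes "\<And>b. b \<in> B \<Longrightarrow> eval_qpoly (\<lambda>z. z) (f b) = b * eval_qpoly (\<lambda>z. z) g"
    and "(\<Sum>b\<in>B. \<alpha> b) \<le> K"
  shows "eval_qpoly (\<lambda>z. z) (cleared_monomial f g B K \<alpha>)
       = eval_qpoly (\<lambda>z. z) g ^ K * (\<Prod>b\<in>B. b ^ \<alpha> b)"
proof -
  let ?g = "eval_qpoly (\<lambda>z::complex. z) g"
  have "eval_qpoly (\<lambda>z. z) (cleared_monomial f g B K \<alpha>)
      = (\<Prod>b\<in>B. (b * ?g) ^ \<alpha> b) * ?g ^ (K - (\<Sum>b\<in>B. \<alpha> b))"
    unfolding cleared_monomial_def eval_qpoly_mult eval_qpoly_prod eval_qpoly_power
    using assms(1) by simp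
  also have "\<dots> = (\<Prod>b\<in>B. b ^ \<alpha> b) * (?g ^ (\<Sum>b\<in>B. \<alpha> b) * ?g ^ (K - (\<Sum>b\<in>B. \<alpha> b)))"
    by (simp add: power_mult_distrib prod.distrib power_sum)
  also have "?g ^ (\<Sum>b\<in>B. \<alpha> b) * ?g ^ (K - (\<Sum>b\<in>B. \<alpha> b)) = ?g ^ K"
    using assms(2) by (simp add: power_add[symmetric])
  finally show ?thesis by simp
qed

lemma card_alg_indep_le_card_generators:
  assumes S: "finite S" and B: "finite B" "B \<subseteq> field_gen S" and ind: "alg_indep_set B"
  shows "card B \<le> card S"
proof (rule ccontr)
  assume "\<not> card B \<le> card S"
  then have km: "card S < card B" by simp
  let ?e = "eval_qpoly (\<lambda>z::complex. z)"
  obtain g f where g: "qvars g \<subseteq> S" "?e g \<noteq> 0"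
    and f: "\<And>b. b \<in> B \<Longrightarrow> qvars (f b) \<subseteq> S" "\<And>b. b \<in> B \<Longrightarrow> ?e (f b) = b * ?e g"
    using field_gen_common_denominator[OF B] by blast
  define m where "m = card B"
  define k where "k = card S"
  define D where "D = tdeg g + (\<Sum>b\<in>B. tdeg (f b))"
  define M where "M = (m * D + 1) ^ k"
  define N where "N = m * M * D"
  define Alph where "Alph = PiE B (\<lambda>_. {..M})"
  define R where "R = cleared_monomial f g B (m * M)"
  define Mon where "Mon = {mo. Poly_Mapping.keys mo \<subseteq> S \<and> (\<forall>i. Poly_Mapping.lookup mo i \<le> N)}"
  have D: "tdeg g \<le> D" "\<And>b. b \<in> B \<Longrightarrow> tdeg (f b) \<le> D"
    unfolding D_def using B(1) member_le_sum[of _ B "\<lambda>b. tdeg (f b)"] by fastforce+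
  have sum_le: "(\<Sum>b\<in>B. \<alpha> b) \<le> m * M" if "\<alpha> \<in> Alph" for \<alpha>
    using sum_bounded_above[of B \<alpha> M] that unfolding Alph_def m_def by auto
  have keys_R: "Poly_Mapping.keys (R \<alpha>) \<subseteq> Mon" if "\<alpha> \<in> Alph" for \<alpha>
  proof
    fix mo assume "mo \<in> Poly_Mapping.keys (R \<alpha>)"
    from keys_cleared_monomial[OF f(1) D(2) g(1) D(1) sum_le[OF that] this[unfolded R_def]]
    show "mo \<in> Mon" unfolding Mon_def N_def by simp
  qed
  have card: "card Mon < card Alph"
  proof -
    have "card Mon \<le> (N + 1) ^ k"
      unfolding Mon_def k_def by (rule card_bounded_monomials[OF S])
    also have "\<dots> < (M + 1) ^ m"
      unfolding N_def M_def using power_counting_inequality km by (simp add: k_def m_def)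
    also have "\<dots> = card Alph"
      unfolding Alph_def m_def using B(1) by (simp add: card_PiE)
    finally show ?thesis .
  qed
  have fin: "finite Mon" "finite Alph"
    using card_bounded_monomials(1)[OF S] B(1) by (auto simp: Mon_def Alph_def finite_PiE)
  obtain c where c: "\<exists>\<alpha>\<in>Alph. c \<alpha> \<noteq> 0" "(\<Sum>\<alpha>\<in>Alph. of_rat (c \<alpha>) * ?e (R \<alpha>)) = 0"
    using qpolys_dependent_if_card_gt[of Mon Alph R, OF fin card keys_R] by blast
  have "?e (R \<alpha>) = ?e g ^ (m * M) * (\<Prod>b\<in>B. b ^ \<alpha> b)" if "\<alpha> \<in> Alph" for \<alpha>
    unfolding R_def by (rule eval_cleared_monomial[OF f(2) sum_le[OF that]])
  with c(2) have "?e g ^ (m * M) * (\<Sum>\<alpha>\<in>Alph. of_rat (c \<alpha>) * (\<Prod>b\<in>B. b ^ \<alpha> b)) = 0"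
    by (simp add: sum_distrib_left ac_simps)
  then have rel: "(\<Sum>\<alpha>\<in>Alph. of_rat (c \<alpha>) * (\<Prod>b\<in>B. b ^ \<alpha> b)) = 0"
    using g(2) by simp
  have "Alph \<subseteq> PiE B (\<lambda>_. UNIV)"
    by (auto simp: Alph_def)
  then have "c \<alpha> = 0" if "\<alpha> \<in> Alph" for \<alpha>
    using alg_indep_set_monomials_lin_indep[OF ind B(1) fin(2) _ rel that] by blast
  with c(1) show False by blast
qed

subsection \<open>Algebraic closures inside \<open>\<complex>\<close>\<close>

text \<open>\<open>\<complex>\<close> as a ring of HOL-Algebra, whose theory of finite extensions gives transitivity of
  algebraicity.\<close>

abbreviation CF :: "complex ring" where
  "CF \<equiv> \<lparr>carrier = UNIV, mult = (*), one = 1, zero = 0, add = (+)\<rparr>"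

lemma CF_cring: "cring CF"
proof (rule cringI)
  show "abelian_group CF"
    by (rule abelian_groupI) (auto intro: left_minus)
  show "Group.comm_monoid CF"
    by (simp add: Group.monoid.intro monoid.monoid_comm_monoidI)
qed (auto simp: distrib_right)

lemma CF_field: "field CF"
proof -
  have U: "Units CF = carrier CF - {\<zero>\<^bsub>CF\<^esub>}"
  proof
    show "Units CF \<subseteq> carrier CF - {\<zero>\<^bsub>CF\<^esub>}" by (auto simp: Units_def)
    show "carrier CF - {\<zero>\<^bsub>CF\<^esub>} \<subseteq> Units CF"
    proof
      fix x assume "x \<in> carrier CF - {\<zero>\<^bsub>CF\<^esub>}"
      then have "x \<noteq> 0" by simp
      then show "x \<in> Units CF" unfolding Units_def by (auto intro!: exI[of _ "inverse x"])
    qed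
  qed
  show ?thesis
    unfolding field_def field_axioms_def domain_def domain_axioms_def
    using CF_cring U by auto
qed

lemma CF_domain: "domain CF"
  using CF_field field_def by blast

interpretation CFi: cring CF by (rule CF_cring)

lemma CF_pow [simp]: "x [^]\<^bsub>CF\<^esub> (n::nat) = x ^ n"
  by (induction n) simp_all

lemma CF_ainv [simp]: "\<ominus>\<^bsub>CF\<^esub> x = - x"
  by (rule CFi.minus_equality) auto

lemma CF_inv [simp]: "x \<noteq> 0 \<Longrightarrow> inv\<^bsub>CF\<^esub> x = inverse x"
  by (rule CFi.inv_char) (auto simp: field_simps)

lemma CF_eval: "CFi.eval p x = (\<Sum>i<length p. p!i * x^(length p - 1 - i))"
proof (induction p)
  case (Cons a p)
  have "CFi.eval (a # p) x = a * x ^ length p + CFi.eval p x" by simp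
  also have "\<dots> = a * x ^ length p + (\<Sum>i<length p. p!i * x^(length p - Suc i))"
    using Cons by simp
  also have "\<dots> = (\<Sum>i<Suc (length p). (a#p)!i * x^(length p - i))"
    by (subst sum.lessThan_Suc_shift) simp
  finally show ?case by simp
qed simp

lemma is_subfield_imp_subfield_CF: "is_subfield K \<Longrightarrow> subfield K CF"
  by (intro field.subfieldI'[OF CF_field] CFi.subringI)
    (auto simp: is_subfield_1 is_subfield_uminus is_subfield_mult is_subfield_add is_subfield_inverse)

lemma subfield_CF_imp_is_subfield: "subfield K CF \<Longrightarrow> is_subfield K"
proof -
  assume K: "subfield K CF"
  have sr: "subring K CF" using K by (rule subfieldE(1))
  have 0: "0 \<in> K" and 1: "1 \<in> K" using subringE(2,3)[OF sr] by auto
  have m: "a * b \<in> K" "a + b \<in> K" "- a \<in> K" if "a \<in> K" "b \<in> K" for a b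
    using subringE(5,6,7)[OF sr] that by auto
  have d: "a - b \<in> K" if "a \<in> K" "b \<in> K" for a b using m[OF that(1) m(3)[OF that(2) that(2)]] by simp
  have i: "inverse a \<in> K" if "a \<in> K" for a
  proof (cases "a = 0")
    case True then show ?thesis using 0 by simp
  next
    case False
    then have "inv\<^bsub>CF\<^esub> a \<in> K" using CFi.subfield_m_inv(1)[OF K] that by auto
    then show ?thesis using False by simp
  qed
  show ?thesis unfolding is_subfield_def using 0 1 m d i by simp
qed

lemma CF_eval_rev_coeffs: "CFi.eval (rev (coeffs f)) x = poly f x"
proof (cases "f = 0")
  case False
  let ?p = "rev (coeffs f)" and ?d = "Polynomial.degree f"
  have len: "length ?p = Suc ?d" using False by (simp add: length_coeffs)
  have "CFi.eval ?p x = (\<Sum>i<Suc ?d. Polynomial.coeff f (?d - i) * x ^ (?d - i))"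
    unfolding CF_eval len
    by (intro sum.cong refl) (use False in \<open>simp add: rev_nth length_coeffs coeffs_nth\<close>)
  also have "\<dots> = (\<Sum>j\<le>?d. Polynomial.coeff f j * x ^ j)"
    by (rule sum.reindex_bij_witness[of _ "\<lambda>j. ?d - j" "\<lambda>j. ?d - j"]) auto
  finally show ?thesis by (simp add: poly_altdef)
qed simp

lemma alg_closure_imp_algebraic:
  assumes K: "is_subfield K" and x: "x \<in> alg_closure K"
  shows "(CFi.algebraic over K) x"
proof -
  from x obtain f where f: "f \<noteq> 0" "\<And>i. Polynomial.coeff f i \<in> K" "poly f x = 0"
    unfolding alg_closure_def by blast
  have "rev (coeffs f) \<in> carrier (K[X]\<^bsub>CF\<^esub>)"
  proof -
    have "set (coeffs f) \<subseteq> K" using f(2) by (auto simp: coeffs_def)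
    moreover have "hd (rev (coeffs f)) \<noteq> 0" using f(1) by (simp add: hd_rev last_coeffs_eq_coeff_degree)
    ultimately show ?thesis by (simp add: univ_poly_def polynomial_def)
  qed
  moreover have "rev (coeffs f) \<noteq> []" using f(1) by simp
  ultimately show ?thesis
    using CFi.algebraicI[of "rev (coeffs f)" K x] CF_eval_rev_coeffs f(3) by simp
qed

lemma algebraic_imp_alg_closure:
  assumes K: "is_subfield K" and x: "(CFi.algebraic over K) x"
  shows "x \<in> alg_closure K"
proof -
  have sr: "subring K CF" using is_subfield_imp_subfield_CF[OF K] by (rule subfieldE(1))
  obtain p where p: "p \<in> carrier (K[X]\<^bsub>CF\<^esub>)" "p \<noteq> []" "CFi.eval p x = 0"
    using domain.algebraicE[OF CF_domain sr _ x] by auto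
  have pK: "set p \<subseteq> K" and hp: "hd p \<noteq> 0" using p(1,2) by (auto simp: univ_poly_def polynomial_def)
  define n where "n = length p - 1"
  define f where "f = (\<Sum>i<length p. Polynomial.monom (p!i) (n - i))"
  have cf: "Polynomial.coeff f j = (if j \<le> n then p ! (n - j) else 0)" for j
  proof -
    have "Polynomial.coeff f j = (\<Sum>i<length p. if n - i = j then p!i else 0)"
      unfolding f_def coeff_sum by (simp add: coeff_monom)
    also have "\<dots> = (\<Sum>i<length p. if i = n - j \<and> j \<le> n then p!i else 0)"
      by (rule sum.cong[OF refl]) (use p(2) in \<open>auto simp: n_def\<close>)
    also have "\<dots> = (if j \<le> n then p ! (n - j) else 0)"
      using p(2) by (cases "j \<le> n") (auto simp: n_def)
    finally show ?thesis by simp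
  qed
  have "Polynomial.coeff f n = hd p" using cf p(2) by (simp add: hd_conv_nth)
  then have "f \<noteq> 0" using hp by auto
  moreover have "Polynomial.coeff f j \<in> K" for j
    using cf[of j] pK is_subfield_0[OF K] p(2) unfolding n_def by (auto intro!: nth_mem)
  moreover have "poly f x = 0"
  proof -
    have "poly f x = (\<Sum>i<length p. p!i * x^(n - i))" unfolding f_def by (simp add: poly_sum poly_monom)
    also have "\<dots> = CFi.eval p x" unfolding CF_eval n_def by simp
    finally show ?thesis using p(3) by simp
  qed
  ultimately show ?thesis unfolding alg_closure_def by blast
qed

lemma alg_closure_mono: "K \<subseteq> K' \<Longrightarrow> alg_closure K \<subseteq> alg_closure K'"
  unfolding alg_closure_def by blast

lemma alg_closure_superset: "is_subfield K \<Longrightarrow> K \<subseteq> alg_closure K"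
proof
  fix k assume K: "is_subfield K" and k: "k \<in> K"
  have "Polynomial.coeff [:-k, 1:] i \<in> K" for i
    using K k by (cases i) (auto simp: coeff_pCons is_subfield_0 is_subfield_1 is_subfield_uminus split: nat.splits)
  moreover have "[:-k, 1:] \<noteq> (0::complex poly)" by simp
  moreover have "poly [:-k, 1:] k = 0" by simp
  ultimately show "k \<in> alg_closure K" unfolding alg_closure_def by blast
qed

lemma is_subfield_alg_closure:
  assumes K: "is_subfield K" shows "is_subfield (alg_closure K)"
proof -
  have "subfield {x \<in> carrier CF. (CFi.algebraic over K) x} CF"
    by (rule field.subfield_of_algebraics[OF CF_field is_subfield_imp_subfield_CF[OF K]])
  moreover have "{x \<in> carrier CF. (CFi.algebraic over K) x} = alg_closure K"
    using alg_closure_imp_algebraic[OF K] algebraic_imp_alg_closure[OF K] by auto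
  ultimately show ?thesis using subfield_CF_imp_is_subfield by simp
qed

lemma alg_closure_root_of_alg_coeffs:
  assumes K: "is_subfield K" and f: "f \<noteq> 0" "\<And>i. Polynomial.coeff f i \<in> alg_closure K" "poly f w = 0"
  shows "w \<in> alg_closure K"
proof -
  have KS: "subfield K CF" by (rule is_subfield_imp_subfield_CF[OF K])
  have KR: "subring K CF" using KS by (rule subfieldE(1))
  define xs where "xs = coeffs f"
  have xsc: "set xs \<subseteq> carrier CF" by simp
  have xsa: "(CFi.algebraic over K) x" if "x \<in> set xs" for x
  proof -
    have "x \<in> range (Polynomial.coeff f)"
      using that unfolding xs_def range_coeff by simp
    then obtain i where "x = Polynomial.coeff f i" by blast
    then show ?thesis using alg_closure_imp_algebraic[OF K f(2)] by simp
  qed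
  define E where "E = CFi.finite_extension K xs"
  have sfE: "subfield E CF" unfolding E_def
    by (rule domain.finite_extension_is_subfield[OF CF_domain KS xsc xsa])
  have fdE: "CFi.finite_dimension K E" unfolding E_def
    by (rule domain.finite_extension_finite_dimension(1)[OF CF_domain KS xsc xsa])
  have xsE: "set xs \<subseteq> E" unfolding E_def by (rule domain.finite_extension_mem[OF CF_domain KR xsc])
  have Ef: "is_subfield E" by (rule subfield_CF_imp_is_subfield[OF sfE])
  have "w \<in> alg_closure E"
  proof -
    have "Polynomial.coeff f i \<in> E" for i
      using range_coeff[of f] xsE is_subfield_0[OF Ef] unfolding xs_def by (metis insert_subset rangeI subsetD)
    then show ?thesis unfolding alg_closure_def using f by blast
  qed
  then have wE: "(CFi.algebraic over E) w" by (rule alg_closure_imp_algebraic[OF Ef])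
  have fd2: "CFi.finite_dimension E (CFi.simple_extension E w)"
    using domain.finite_dimension_simple_extension[OF CF_domain sfE, of w] wE by simp
  have fd3: "CFi.finite_dimension K (CFi.simple_extension E w)"
    by (rule CFi.telescopic_base_dim(1)[OF KS sfE fdE fd2])
  have ER: "subring E CF" using sfE by (rule subfieldE(1))
  have sub: "subring (CFi.simple_extension E w) CF"
    by (rule domain.simple_extension_is_subring[OF CF_domain ER]) simp
  have mem: "w \<in> CFi.simple_extension E w" by (rule CFi.simple_extension_mem[OF ER]) simp
  have "(CFi.algebraic over K) w" by (rule CFi.finite_dimension_imp_algebraic[OF KS sub fd3 mem])
  then show ?thesis by (rule algebraic_imp_alg_closure[OF K])
qed

lemma alg_closure_field_gen_subset:
  assumes K: "is_subfield K" and S: "S \<subseteq> alg_closure K"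
  shows "alg_closure (field_gen S) \<subseteq> alg_closure K"
proof
  have gS: "field_gen S \<subseteq> alg_closure K" by (rule field_gen_least[OF is_subfield_alg_closure[OF K] S])
  fix w assume "w \<in> alg_closure (field_gen S)"
  then obtain f where f: "f \<noteq> 0" "\<And>i. Polynomial.coeff f i \<in> field_gen S" "poly f w = 0"
    unfolding alg_closure_def by blast
  show "w \<in> alg_closure K" by (rule alg_closure_root_of_alg_coeffs[OF K f(1) _ f(3)]) (use f(2) gS in blast)
qed

subsection \<open>Algebraic dependence\<close>

definition qcoeff_var :: "'i \<Rightarrow> nat \<Rightarrow> 'i qpoly \<Rightarrow> 'i qpoly" where
  "qcoeff_var s j P = (\<Sum>mo\<in>{mo \<in> Poly_Mapping.keys P. Poly_Mapping.lookup mo s = j}.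
      Poly_Mapping.single (Poly_Mapping.update s 0 mo) (Poly_Mapping.lookup P mo))"

lemma monomial_split_var:
  "mo = Poly_Mapping.update s 0 mo + Poly_Mapping.single s (Poly_Mapping.lookup mo s)"
  by (rule poly_mapping_eqI) (simp add: lookup_add lookup_update lookup_single when_def)

lemma qvars_qcoeff_var: "qvars (qcoeff_var s j P) \<subseteq> qvars P - {s}"
proof -
  have "qvars (qcoeff_var s j P) \<subseteq> (\<Union>mo\<in>Poly_Mapping.keys P.
      qvars (Poly_Mapping.single (Poly_Mapping.update s 0 mo) (Poly_Mapping.lookup P mo)))"
    unfolding qcoeff_var_def using qvars_sum by fastforce
  also have "\<dots> \<subseteq> (\<Union>mo\<in>Poly_Mapping.keys P. Poly_Mapping.keys (Poly_Mapping.update s 0 mo))"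
    by (intro UN_mono order_refl qvars_single)
  also have "\<dots> \<subseteq> qvars P - {s}"
    by (auto simp: qvars_def keys_update)
  finally show ?thesis .
qed

lemma eval_qpoly_split_var:
  assumes "\<And>mo. mo \<in> Poly_Mapping.keys P \<Longrightarrow> Poly_Mapping.lookup mo s \<le> N"
  shows "eval_qpoly x P = (\<Sum>j\<le>N. eval_qpoly x (qcoeff_var s j P) * x s ^ j)"
proof -
  have "eval_qpoly x P = (\<Sum>j\<le>N. \<Sum>mo\<in>{mo \<in> Poly_Mapping.keys P. Poly_Mapping.lookup mo s = j}.
      of_rat (Poly_Mapping.lookup P mo) * qmono x mo)"
    unfolding eval_qpoly_qmono by (rule sum.group[symmetric]) (use assms in auto)
  also have "\<dots> = (\<Sum>j\<le>N. eval_qpoly x (qcoeff_var s j P) * x s ^ j)"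
  proof (rule sum.cong[OF refl])
    fix j
    have "qmono x mo = qmono x (Poly_Mapping.update s 0 mo) * x s ^ j"
      if "Poly_Mapping.lookup mo s = j" for mo
      using qmono_add[of x "Poly_Mapping.update s 0 mo" "Poly_Mapping.single s j"]
        monomial_split_var[of mo s] that by simp
    then show "(\<Sum>mo\<in>{mo \<in> Poly_Mapping.keys P. Poly_Mapping.lookup mo s = j}.
        of_rat (Poly_Mapping.lookup P mo) * qmono x mo) = eval_qpoly x (qcoeff_var s j P) * x s ^ j"
      unfolding qcoeff_var_def eval_qpoly_sum eval_qpoly_single sum_distrib_right
      by (intro sum.cong refl) (simp add: mult.assoc)
  qed
  finally show ?thesis .
qed

lemma lookup_qcoeff_var:
  assumes "mo0 \<in> Poly_Mapping.keys P"
  shows "Poly_Mapping.lookup (qcoeff_var s (Poly_Mapping.lookup mo0 s) P) (Poly_Mapping.update s 0 mo0)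
       = Poly_Mapping.lookup P mo0"
proof -
  have "Poly_Mapping.update s 0 mo = Poly_Mapping.update s 0 mo0 \<longleftrightarrow> mo = mo0"
    if "Poly_Mapping.lookup mo s = Poly_Mapping.lookup mo0 s" for mo
    using monomial_split_var[of mo s] monomial_split_var[of mo0 s] that by metis
  then have "Poly_Mapping.lookup (qcoeff_var s (Poly_Mapping.lookup mo0 s) P) (Poly_Mapping.update s 0 mo0)
      = (\<Sum>mo\<in>{mo \<in> Poly_Mapping.keys P. Poly_Mapping.lookup mo s = Poly_Mapping.lookup mo0 s}.
          if mo = mo0 then Poly_Mapping.lookup P mo else 0)"
    unfolding qcoeff_var_def lookup_sum by (intro sum.cong refl) (simp add: lookup_single when_def)
  also have "\<dots> = Poly_Mapping.lookup P mo0"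
    using assms by simp
  finally show ?thesis .
qed

lemma alg_dependent_imp_alg_closure:
  assumes ind: "alg_indep_set D" and "s \<notin> D" and dep: "\<not> alg_indep_set (insert s D)"
  shows "s \<in> alg_closure (field_gen D)"
proof -
  let ?e = "eval_qpoly (\<lambda>z::complex. z)"
  obtain P where P: "qvars P \<subseteq> insert s D" "?e P = 0" "P \<noteq> 0"
    using dep unfolding alg_indep_set_def alg_indep_def qvars_def by blast
  define N where "N = Max (insert 0 ((\<lambda>mo. Poly_Mapping.lookup mo s) ` Poly_Mapping.keys P))"
  have le_N: "Poly_Mapping.lookup mo s \<le> N" if "mo \<in> Poly_Mapping.keys P" for mo
    unfolding N_def using that by (intro Max_ge) auto
  have vars: "qvars (qcoeff_var s j P) \<subseteq> D" for j
    using qvars_qcoeff_var[of s j P] P(1) by blast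
  define f where "f = (\<Sum>j\<le>N. Polynomial.monom (?e (qcoeff_var s j P)) j)"
  have coeff_f: "Polynomial.coeff f i = (if i \<le> N then ?e (qcoeff_var s i P) else 0)" for i
    unfolding f_def coeff_sum by (simp add: coeff_monom)
  have "poly f s = ?e P"
    unfolding f_def by (simp add: poly_sum poly_monom eval_qpoly_split_var[OF le_N])
  then have "poly f s = 0"
    using P(2) by simp
  moreover have "Polynomial.coeff f i \<in> field_gen D" for i
    using coeff_f[of i] eval_qpoly_in_field_gen[OF vars] is_subfield_0[OF is_subfield_field_gen]
    by simp
  moreover have "f \<noteq> 0"
  proof -
    obtain mo0 where mo0: "mo0 \<in> Poly_Mapping.keys P"
      using P(3) by (metis all_not_in_conv keys_eq_empty)
    define j0 where "j0 = Poly_Mapping.lookup mo0 s"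
    have "qcoeff_var s j0 P \<noteq> 0"
      using lookup_qcoeff_var[OF mo0, of s] mo0 unfolding j0_def by (auto simp: in_keys_iff)
    then have "?e (qcoeff_var s j0 P) \<noteq> 0"
      using alg_indep_eval_qpoly_eq_0[OF ind[unfolded alg_indep_set_def] vars] by blast
    moreover have "j0 \<le> N" using le_N[OF mo0] by (simp add: j0_def)
    ultimately have "Polynomial.coeff f j0 \<noteq> 0" using coeff_f by simp
    then show ?thesis by auto
  qed
  ultimately show ?thesis
    unfolding alg_closure_def by blast
qed

lemma trdeg_eq_card_of_maximal:
  assumes "finite D" "D \<subseteq> L" "alg_indep_set D"
    and "\<And>B. finite B \<Longrightarrow> B \<subseteq> L \<Longrightarrow> alg_indep_set B \<Longrightarrow> card B \<le> card D"
  shows "trdeg L = enat (card D)"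
  unfolding trdeg_def
proof (rule antisym)
  show "(SUP B\<in>{B. finite B \<and> B \<subseteq> L \<and> alg_indep_set B}. enat (card B)) \<le> enat (card D)"
    by (rule SUP_least) (use assms(4) in auto)
  show "enat (card D) \<le> (SUP B\<in>{B. finite B \<and> B \<subseteq> L \<and> alg_indep_set B}. enat (card B))"
    by (rule SUP_upper2[of D]) (use assms(1-3) in auto)
qed

lemma field_gen_transcendence_basis:
  assumes Sf: "finite S" and Sk: "card S \<le> k" and K: "is_subfield K" and KS: "K \<subseteq> field_gen S"
    and Df: "finite D" and DK: "D \<subseteq> K" and Di: "alg_indep_set D" and Dk: "card D = k"
  shows "alg_closure (field_gen S) = alg_closure K \<and> trdeg (field_gen S) = enat k"
proof -
  have DL: "D \<subseteq> field_gen S" using DK KS by blast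
  have bound: "card B \<le> k" if "finite B" "B \<subseteq> field_gen S" "alg_indep_set B" for B
    using card_alg_indep_le_card_generators[OF Sf that] Sk by simp
  have S_alg: "S \<subseteq> alg_closure (field_gen D)"
  proof
    fix s assume s: "s \<in> S"
    show "s \<in> alg_closure (field_gen D)"
    proof (cases "s \<in> D")
      case True
      then show ?thesis
        using field_gen_superset[of D] alg_closure_superset[OF is_subfield_field_gen[of D]] by blast
    next
      case False
      have "\<not> alg_indep_set (insert s D)"
      proof
        assume "alg_indep_set (insert s D)"
        moreover have "insert s D \<subseteq> field_gen S" using s DL field_gen_superset[of S] by blast
        ultimately have "card (insert s D) \<le> k" using bound Df by blast
        then show False using False Df Dk by simp
      qed
      then show ?thesis by (rule alg_dependent_imp_alg_closure[OF Di False])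
    qed
  qed
  have "alg_closure (field_gen S) \<subseteq> alg_closure (field_gen D)"
    by (rule alg_closure_field_gen_subset[OF is_subfield_field_gen S_alg])
  also have "\<dots> \<subseteq> alg_closure K" by (rule alg_closure_mono[OF field_gen_least[OF K DK]])
  finally have "alg_closure (field_gen S) \<subseteq> alg_closure K" .
  moreover have "alg_closure K \<subseteq> alg_closure (field_gen S)"
    by (rule alg_closure_mono[OF KS])
  moreover have "trdeg (field_gen S) = enat k"
    using trdeg_eq_card_of_maximal[OF Df DL Di] bound Dk by blast
  ultimately show ?thesis by blast
qed
subsection \<open>Partial derivatives\<close>

definition qpderiv :: "'i \<Rightarrow> 'i qpoly \<Rightarrow> 'i qpoly" where
  "qpderiv i P = (\<Sum>mo\<in>Poly_Mapping.keys P.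
     Poly_Mapping.single (mo - Poly_Mapping.single i 1) (of_nat (Poly_Mapping.lookup mo i) * Poly_Mapping.lookup P mo))"

lemma eval_qpoly_qpderiv: "eval_qpoly x (qpderiv i P) = (\<Sum>mo\<in>Poly_Mapping.keys P.
     of_rat (Poly_Mapping.lookup P mo) * of_nat (Poly_Mapping.lookup mo i) * qmono x (mo - Poly_Mapping.single i 1))"
  unfolding qpderiv_def eval_qpoly_sum eval_qpoly_single by (simp add: of_rat_mult ac_simps)

lemma qmono_diff_single:
  assumes "i \<in> Poly_Mapping.keys mo"
  shows "qmono x (mo - Poly_Mapping.single i 1) =
    x i ^ (Poly_Mapping.lookup mo i - 1) * (\<Prod>y\<in>Poly_Mapping.keys mo - {i}. x y ^ Poly_Mapping.lookup mo y)"
proof -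
  have "Poly_Mapping.keys (mo - Poly_Mapping.single i 1) \<subseteq> Poly_Mapping.keys mo"
    by (auto simp: in_keys_iff lookup_minus lookup_single when_def)
  then have "qmono x (mo - Poly_Mapping.single i 1) =
      (\<Prod>y\<in>Poly_Mapping.keys mo. x y ^ Poly_Mapping.lookup (mo - Poly_Mapping.single i 1) y)"
    by (rule qmono_eq_prod_superset[rotated]) simp
  also have "\<dots> = x i ^ Poly_Mapping.lookup (mo - Poly_Mapping.single i 1) i *
     (\<Prod>y\<in>Poly_Mapping.keys mo - {i}. x y ^ Poly_Mapping.lookup (mo - Poly_Mapping.single i 1) y)"
    using assms by (simp add: prod.remove)
  also have "\<dots> = x i ^ (Poly_Mapping.lookup mo i - 1) * (\<Prod>y\<in>Poly_Mapping.keys mo - {i}. x y ^ Poly_Mapping.lookup mo y)"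
  proof -
    have "(\<Prod>y\<in>Poly_Mapping.keys mo - {i}. x y ^ Poly_Mapping.lookup (mo - Poly_Mapping.single i 1) y) =
          (\<Prod>y\<in>Poly_Mapping.keys mo - {i}. x y ^ Poly_Mapping.lookup mo y)"
      by (rule prod.cong[OF refl]) (auto simp: lookup_minus lookup_single when_def)
    moreover have "Poly_Mapping.lookup (mo - Poly_Mapping.single i 1) i = Poly_Mapping.lookup mo i - 1"
      by (simp add: lookup_minus)
    ultimately show ?thesis by simp
  qed
  finally show ?thesis .
qed

lemma has_real_derivative_qmono:
  fixes h :: "'i \<Rightarrow> real \<Rightarrow> real"
  assumes d: "\<And>i. i \<in> Poly_Mapping.keys mo \<Longrightarrow> (h i has_real_derivative h' i) (at t)"
  shows "((\<lambda>t. qmono (\<lambda>i. h i t) mo) has_real_derivative (\<Sum>i\<in>Poly_Mapping.keys mo.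
           of_nat (Poly_Mapping.lookup mo i) * qmono (\<lambda>i. h i t) (mo - Poly_Mapping.single i 1) * h' i)) (at t)"
proof -
  have "(\<Sum>i\<in>Poly_Mapping.keys mo. (of_nat (Poly_Mapping.lookup mo i) * h' i
          * h i t ^ (Poly_Mapping.lookup mo i - 1)) * (\<Prod>y\<in>Poly_Mapping.keys mo - {i}. h y t ^ Poly_Mapping.lookup mo y))
      = (\<Sum>i\<in>Poly_Mapping.keys mo.
          of_nat (Poly_Mapping.lookup mo i) * qmono (\<lambda>i. h i t) (mo - Poly_Mapping.single i 1) * h' i)"
    by (intro sum.cong refl, subst qmono_diff_single) (simp_all add: ac_simps)
  moreover have "((\<lambda>t. \<Prod>i\<in>Poly_Mapping.keys mo. h i t ^ Poly_Mapping.lookup mo i) has_real_derivative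
      (\<Sum>i\<in>Poly_Mapping.keys mo. (of_nat (Poly_Mapping.lookup mo i) * h' i
          * h i t ^ (Poly_Mapping.lookup mo i - 1)) * (\<Prod>y\<in>Poly_Mapping.keys mo - {i}. h y t ^ Poly_Mapping.lookup mo y))) (at t)"
    by (rule has_field_derivative_prod) (use DERIV_power[OF d] in \<open>simp add: mult.assoc\<close>)
  ultimately show ?thesis
    by (simp add: qmono_def)
qed

lemma has_real_derivative_eval_qpoly:
  fixes P :: "'i qpoly" and h :: "'i \<Rightarrow> real \<Rightarrow> real"
  assumes d: "\<And>i. i \<in> qvars P \<Longrightarrow> (h i has_real_derivative h' i) (at t)"
  shows "((\<lambda>t. eval_qpoly (\<lambda>i. h i t) P) has_real_derivative
           (\<Sum>i\<in>qvars P. eval_qpoly (\<lambda>i. h i t) (qpderiv i P) * h' i)) (at t)"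
proof -
  let ?x = "\<lambda>i. h i t"
  let ?dmono = "\<lambda>mo i. of_nat (Poly_Mapping.lookup mo i) * qmono ?x (mo - Poly_Mapping.single i 1) * h' i"
  have "((\<lambda>t. \<Sum>mo\<in>Poly_Mapping.keys P. of_rat (Poly_Mapping.lookup P mo) * qmono (\<lambda>i. h i t) mo)
      has_real_derivative (\<Sum>mo\<in>Poly_Mapping.keys P. of_rat (Poly_Mapping.lookup P mo) *
         (\<Sum>i\<in>Poly_Mapping.keys mo. ?dmono mo i))) (at t)"
    by (intro DERIV_sum DERIV_cmult has_real_derivative_qmono d) (auto simp: qvars_def)
  moreover have "(\<Sum>mo\<in>Poly_Mapping.keys P. of_rat (Poly_Mapping.lookup P mo) *
      (\<Sum>i\<in>Poly_Mapping.keys mo. ?dmono mo i))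
    = (\<Sum>mo\<in>Poly_Mapping.keys P. \<Sum>i\<in>qvars P. of_rat (Poly_Mapping.lookup P mo) * ?dmono mo i)"
    unfolding sum_distrib_left
    by (intro sum.cong refl sum.mono_neutral_left) (auto simp: qvars_def in_keys_iff)
  also have "\<dots> = (\<Sum>i\<in>qvars P. eval_qpoly ?x (qpderiv i P) * h' i)"
    by (subst sum.swap) (simp add: eval_qpoly_qpderiv sum_distrib_right sum_distrib_left ac_simps)
  ultimately show ?thesis
    by (simp add: eval_qpoly_qmono)
qed

lemma qvars_qpderiv: "qvars (qpderiv i P) \<subseteq> qvars P"
proof -
  have "qvars (qpderiv i P) \<subseteq> (\<Union>mo\<in>Poly_Mapping.keys P. qvars (Poly_Mapping.single (mo - Poly_Mapping.single i 1)
      (of_nat (Poly_Mapping.lookup mo i) * Poly_Mapping.lookup P mo)))"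
    unfolding qpderiv_def by (rule qvars_sum)
  also have "\<dots> \<subseteq> (\<Union>mo\<in>Poly_Mapping.keys P. Poly_Mapping.keys (mo - Poly_Mapping.single i 1))"
    by (intro UN_mono order_refl qvars_single)
  also have "\<dots> \<subseteq> qvars P"
    by (auto simp: qvars_def in_keys_iff lookup_minus lookup_single when_def split: if_splits)
  finally show ?thesis .
qed

lemma keys_qpderiv: "Poly_Mapping.keys (qpderiv i P) \<subseteq>
   (\<lambda>mo. mo - Poly_Mapping.single i 1) ` {mo \<in> Poly_Mapping.keys P. Poly_Mapping.lookup mo i \<noteq> 0}"
proof -
  have "Poly_Mapping.keys (qpderiv i P) \<subseteq> (\<Union>mo\<in>Poly_Mapping.keys P. Poly_Mapping.keys (Poly_Mapping.single (mo - Poly_Mapping.single i 1)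
      (of_nat (Poly_Mapping.lookup mo i) * Poly_Mapping.lookup P mo)))"
    unfolding qpderiv_def by (rule keys_sum)
  also have "\<dots> \<subseteq> (\<lambda>mo. mo - Poly_Mapping.single i 1) ` {mo \<in> Poly_Mapping.keys P. Poly_Mapping.lookup mo i \<noteq> 0}"
    by (auto simp: in_keys_iff)
  finally show ?thesis .
qed

lemma mdeg_diff_single: "Poly_Mapping.lookup mo i \<noteq> 0 \<Longrightarrow> mdeg (mo - Poly_Mapping.single i 1) < mdeg mo"
proof -
  assume h: "Poly_Mapping.lookup mo i \<noteq> 0"
  have e: "mo = (mo - Poly_Mapping.single i 1) + Poly_Mapping.single i 1"
  proof (rule poly_mapping_eqI)
    fix k show "Poly_Mapping.lookup mo k = Poly_Mapping.lookup ((mo - Poly_Mapping.single i 1) + Poly_Mapping.single i 1) k"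
      by (cases "k = i") (use h in \<open>auto simp: lookup_add lookup_minus lookup_single when_def\<close>)
  qed
  have "mdeg mo = mdeg ((mo - Poly_Mapping.single i 1) + Poly_Mapping.single i 1)"
    using e by (rule arg_cong)
  also have "\<dots> = mdeg (mo - Poly_Mapping.single i 1) + 1"
    by (simp only: mdeg_add) (simp add: mdeg_def)
  finally have "mdeg mo = mdeg (mo - Poly_Mapping.single i 1) + 1" .
  then show ?thesis by simp
qed

lemma tdeg_qpderiv_less: "qpderiv i P \<noteq> 0 \<Longrightarrow> tdeg (qpderiv i P) < tdeg P"
proof -
  assume nz: "qpderiv i P \<noteq> 0"
  then obtain k where k: "k \<in> Poly_Mapping.keys (qpderiv i P)" by (metis all_not_in_conv keys_eq_empty)
  have "k \<in> (\<lambda>mo. mo - Poly_Mapping.single i 1) ` {mo \<in> Poly_Mapping.keys P. Poly_Mapping.lookup mo i \<noteq> 0}"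
    using keys_qpderiv[of i P] k by (rule subsetD)
  then obtain mo where mo: "mo \<in> Poly_Mapping.keys P" "Poly_Mapping.lookup mo i \<noteq> 0" by auto
  have pos: "0 < tdeg P" using mdeg_diff_single[OF mo(2)] mdeg_le_tdeg[OF mo(1)] by linarith
  have "tdeg (qpderiv i P) \<le> tdeg P - 1"
    unfolding tdeg_le_iff
  proof
    fix k assume "k \<in> Poly_Mapping.keys (qpderiv i P)"
    then have "k \<in> (\<lambda>mo. mo - Poly_Mapping.single i 1) ` {mo \<in> Poly_Mapping.keys P. Poly_Mapping.lookup mo i \<noteq> 0}"
      using keys_qpderiv[of i P] by (rule subsetD[rotated])
    then obtain mo where "mo \<in> Poly_Mapping.keys P" "Poly_Mapping.lookup mo i \<noteq> 0" "k = mo - Poly_Mapping.single i 1"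
      by auto
    then show "mdeg k \<le> tdeg P - 1" using mdeg_diff_single[of mo i] mdeg_le_tdeg[of mo P] by simp
  qed
  then show ?thesis using pos by linarith
qed

lemma qpderiv_eq_0_if_not_qvar: "i \<notin> qvars P \<Longrightarrow> qpderiv i P = 0"
  unfolding qpderiv_def by (rule sum.neutral) (auto simp: qvars_def in_keys_iff)

lemma lookup_qpderiv:
  assumes "Poly_Mapping.lookup mo0 i \<noteq> 0"
  shows "Poly_Mapping.lookup (qpderiv i P) (mo0 - Poly_Mapping.single i 1)
       = of_nat (Poly_Mapping.lookup mo0 i) * Poly_Mapping.lookup P mo0"
proof -
  have cancel: "mo - Poly_Mapping.single i 1 = mo0 - Poly_Mapping.single i 1 \<longleftrightarrow> mo = mo0"
    if "Poly_Mapping.lookup mo i \<noteq> 0" for mo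
  proof
    assume h: "mo - Poly_Mapping.single i 1 = mo0 - Poly_Mapping.single i 1"
    show "mo = mo0"
    proof (rule poly_mapping_eqI)
      fix k
      have "Poly_Mapping.lookup (mo - Poly_Mapping.single i 1) k = Poly_Mapping.lookup (mo0 - Poly_Mapping.single i 1) k"
        using h by simp
      then show "Poly_Mapping.lookup mo k = Poly_Mapping.lookup mo0 k"
        using that assms by (auto simp: lookup_minus lookup_single when_def split: if_splits)
    qed
  qed simp
  have "Poly_Mapping.lookup (qpderiv i P) (mo0 - Poly_Mapping.single i 1) = (\<Sum>mo\<in>Poly_Mapping.keys P.
      if mo = mo0 then of_nat (Poly_Mapping.lookup mo i) * Poly_Mapping.lookup P mo else 0)"
    unfolding qpderiv_def lookup_sum
    by (intro sum.cong refl) (use cancel in \<open>auto simp: lookup_single when_def\<close>)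
  also have "\<dots> = of_nat (Poly_Mapping.lookup mo0 i) * Poly_Mapping.lookup P mo0"
    by (simp add: in_keys_iff)
  finally show ?thesis .
qed

lemma eval_qpoly_neq_0_if_qpderivs_0:
  assumes "\<And>i. qpderiv i P = 0" and "P \<noteq> 0"
  shows "eval_qpoly x P \<noteq> 0"
proof -
  have "mo = 0" if "mo \<in> Poly_Mapping.keys P" for mo
  proof (rule ccontr)
    assume "mo \<noteq> 0"
    then obtain i where i: "Poly_Mapping.lookup mo i \<noteq> 0"
      by (metis lookup_zero poly_mapping_eqI)
    then have "Poly_Mapping.lookup (qpderiv i P) (mo - Poly_Mapping.single i 1) \<noteq> 0"
      using lookup_qpderiv[OF i, of P] that by (simp add: in_keys_iff)
    then show False using assms(1) by simp
  qed
  then have "Poly_Mapping.keys P = {0}"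
    using assms(2) by (metis keys_eq_empty subsetI subset_singletonD singletonI)
  moreover from this have "Poly_Mapping.lookup P 0 \<noteq> 0"
    by (metis in_keys_iff singletonI)
  ultimately show ?thesis
    by (simp add: eval_qpoly_qmono)
qed
subsection \<open>Squared edge lengths of a generic realisation\<close>

definition sqdist_qpoly :: "'v \<times> 'v \<Rightarrow> ('v \<times> bool) qpoly" where
  "sqdist_qpoly e = (qvar (fst e, False) - qvar (snd e, False)) ^ 2
                  + (qvar (fst e, True) - qvar (snd e, True)) ^ 2"

lemma eval_sqdist_qpoly:
  "eval_qpoly y (sqdist_qpoly e)
     = (y (fst e, False) - y (snd e, False)) ^ 2 + (y (fst e, True) - y (snd e, True)) ^ 2"
  by (simp add: sqdist_qpoly_def eval_qpoly_add eval_qpoly_power eval_qpoly_diff)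

lemma eval_sqdist_qpoly_coord: "eval_qpoly (coord p) (sqdist_qpoly e) = dsq (cdiff (p (fst e)) (p (snd e)))"
  by (simp add: eval_sqdist_qpoly coord_def dsq_def cdiff_def)

lemma qvars_sqdist_qpoly: "qvars (sqdist_qpoly e) \<subseteq> {fst e, snd e} \<times> UNIV"
proof -
  have diff: "qvars (qvar (fst e, b) - qvar (snd e, b)) \<subseteq> {fst e, snd e} \<times> UNIV" for b
    using qvars_diff[of "qvar (fst e, b)" "qvar (snd e, b)"] by auto
  have sq: "qvars ((qvar (fst e, b) - qvar (snd e, b)) ^ 2) \<subseteq> {fst e, snd e} \<times> UNIV" for b
    by (rule order_trans[OF qvars_power diff])
  show ?thesis
    unfolding sqdist_qpoly_def by (intro order_trans[OF qvars_add] Un_least sq)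
qed

lemma has_real_derivative_sqdist_qpoly:
  fixes pr :: "'v \<Rightarrow> real \<times> real"
  assumes "u \<noteq> v"
  shows "((\<lambda>t. eval_qpoly (\<lambda>w. coord pr w + (if w = c then t else 0)) (sqdist_qpoly (u, v)))
           has_real_derivative 2 * rig_row pr (u, v) c) (at 0)"
proof (cases c)
  case (Pair w i)
  let ?a = "\<lambda>b. coord pr (u, b) - coord pr (v, b)"
  let ?\<delta> = "\<lambda>x. if x = c then 1 else (0::real)"
  have "((\<lambda>t. eval_qpoly (\<lambda>w. coord pr w + (if w = c then t else 0)) (sqdist_qpoly (u, v)))
      has_real_derivative 2 * ?a False * (?\<delta> (u, False) - ?\<delta> (v, False))
                        + 2 * ?a True * (?\<delta> (u, True) - ?\<delta> (v, True))) (at 0)"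
    unfolding eval_sqdist_qpoly fst_conv snd_conv by (auto intro!: derivative_eq_intros)
  moreover have "2 * ?a False * (?\<delta> (u, False) - ?\<delta> (v, False))
      + 2 * ?a True * (?\<delta> (u, True) - ?\<delta> (v, True)) = 2 * rig_row pr (u, v) c"
    using assms unfolding Pair by (cases i) (auto simp: rig_row_def)
  ultimately show ?thesis by simp
qed

definition rig_rows_indep :: "('v \<Rightarrow> real \<times> real) \<Rightarrow> ('v \<times> 'v) set \<Rightarrow> bool" where
  "rig_rows_indep pr F \<longleftrightarrow>
     (\<forall>c :: 'v \<times> 'v \<Rightarrow> real. (\<forall>x. (\<Sum>e\<in>F. c e * rig_row pr e x) = 0) \<longrightarrow> (\<forall>e\<in>F. c e = 0))"

lemma rig_rows_indep_reindex:
  assumes "rig_rows_indep pr F" "finite F" "inj_on \<phi> Z" "\<phi> ` Z \<subseteq> F"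
    and "\<And>x. (\<Sum>z\<in>Z. a z * rig_row pr (\<phi> z) x) = 0" and "z \<in> Z"
  shows "a z = 0"
proof -
  define c where "c e = (if e \<in> \<phi> ` Z then a (the_inv_into Z \<phi> e) else 0)" for e
  have "(\<Sum>e\<in>F. c e * rig_row pr e x) = 0" for x
  proof -
    have "(\<Sum>e\<in>F. c e * rig_row pr e x) = (\<Sum>e\<in>\<phi> ` Z. c e * rig_row pr e x)"
      by (rule sum.mono_neutral_right[OF assms(2,4)]) (auto simp: c_def)
    also have "\<dots> = (\<Sum>z\<in>Z. a z * rig_row pr (\<phi> z) x)"
      by (simp add: sum.reindex[OF assms(3)] c_def the_inv_into_f_f[OF assms(3)])
    finally show ?thesis using assms(5) by simp
  qed
  then have "c (\<phi> z) = 0"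
    using assms(1,4,6) unfolding rig_rows_indep_def by blast
  then show ?thesis
    using assms(6) by (simp add: c_def the_inv_into_f_f[OF assms(3)])
qed

lemma qpderiv_combination_eq_0_if_relation:
  fixes \<sigma> :: "'z \<Rightarrow> 'i qpoly" and y :: "real \<Rightarrow> 'i \<Rightarrow> real"
  assumes "\<And>t. eval_qpoly (\<lambda>z. eval_qpoly (y t) (\<sigma> z)) P = 0"
    and "\<And>z. z \<in> qvars P \<Longrightarrow> ((\<lambda>t. eval_qpoly (y t) (\<sigma> z)) has_real_derivative d z) (at 0)"
  shows "(\<Sum>z\<in>qvars P. eval_qpoly (\<lambda>z. eval_qpoly (y 0) (\<sigma> z)) (qpderiv z P) * d z) = 0"
proof -
  have "((\<lambda>t. eval_qpoly (\<lambda>z. eval_qpoly (y t) (\<sigma> z)) P) has_real_derivative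
      (\<Sum>z\<in>qvars P. eval_qpoly (\<lambda>z. eval_qpoly (y 0) (\<sigma> z)) (qpderiv z P) * d z)) (at 0)"
    by (rule has_real_derivative_eval_qpoly[of P "\<lambda>z t. eval_qpoly (y t) (\<sigma> z)"]) (rule assms(2))
  moreover have "((\<lambda>t. eval_qpoly (\<lambda>z. eval_qpoly (y t) (\<sigma> z)) P) has_real_derivative 0) (at 0)"
    using assms(1) by simp
  ultimately show ?thesis by (rule DERIV_unique)
qed

lemma edge_lengths_inj_on:
  fixes pr :: "'v \<Rightarrow> real \<times> real" and p0 :: "'v \<Rightarrow> complex \<times> complex"
  assumes F: "graph V F" and g0: "generic V p0" and ind: "rig_rows_indep pr F"
  shows "inj_on (\<lambda>e. eval_qpoly (coord p0) (sqdist_qpoly e)) F"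
proof (rule inj_onI, rule ccontr)
  fix e f assume ef: "e \<in> F" "f \<in> F" "eval_qpoly (coord p0) (sqdist_qpoly e) = eval_qpoly (coord p0) (sqdist_qpoly f)"
    "e \<noteq> f"
  have "finite F" "F \<subseteq> V \<times> V" and loopfree: "\<And>u v. (u, v) \<in> F \<Longrightarrow> u \<noteq> v"
    using F unfolding graph_def by (auto intro: finite_subset)
  have "qvars (sqdist_qpoly g) \<subseteq> V \<times> UNIV" if "g \<in> F" for g
    using qvars_sqdist_qpoly[of g] that \<open>F \<subseteq> V \<times> V\<close> by (cases g) auto
  then have vars: "qvars (sqdist_qpoly e - sqdist_qpoly f) \<subseteq> V \<times> UNIV"
    using qvars_diff[of "sqdist_qpoly e" "sqdist_qpoly f"] ef(1,2) by blast
  have "sqdist_qpoly e - sqdist_qpoly f = 0"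
    by (rule alg_indep_eval_qpoly_eq_0[OF g0[unfolded generic_def] vars]) (simp add: eval_qpoly_diff ef(3))
  then have same: "sqdist_qpoly e = sqdist_qpoly f" by simp
  let ?y = "\<lambda>c t w. coord pr w + (if w = c then t else 0)"
  have deriv: "((\<lambda>t. eval_qpoly (?y c t) (sqdist_qpoly g)) has_real_derivative 2 * rig_row pr g c) (at 0)"
    if "g \<in> F" for g c
  proof -
    obtain u v where "g = (u, v)" by fastforce
    then show ?thesis using has_real_derivative_sqdist_qpoly[OF loopfree] that by simp
  qed
  have "rig_row pr e x = rig_row pr f x" for x
    using DERIV_unique[OF deriv[OF ef(1)] deriv[OF ef(2), folded same, of x]] by simp
  define a where "a g = (if g = e then 1 else - 1 :: real)" for g
  have comb: "(\<Sum>g\<in>{e, f}. a g * rig_row pr (id g) x) = 0" for x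
    using ef(4) \<open>rig_row pr e x = rig_row pr f x\<close> by (simp add: a_def)
  have "a e = 0"
    by (rule rig_rows_indep_reindex[OF ind \<open>finite F\<close> inj_on_id _ comb]) (use ef in auto)
  then show False by (simp add: a_def)
qed

lemma rig_row_combination_of_sqdist_relation:
  fixes pr :: "'v \<Rightarrow> real \<times> real" and edge :: "'z \<Rightarrow> 'v \<times> 'v"
  assumes rel: "\<And>y :: 'v \<times> bool \<Rightarrow> real. eval_qpoly (\<lambda>z. eval_qpoly y (sqdist_qpoly (edge z))) P = 0"
    and loopfree: "\<And>z. z \<in> qvars P \<Longrightarrow> fst (edge z) \<noteq> snd (edge z)"
  shows "(\<Sum>z\<in>qvars P. 2 * eval_qpoly (\<lambda>z. eval_qpoly (coord pr) (sqdist_qpoly (edge z))) (qpderiv z P)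
           * rig_row pr (edge z) c) = 0"
proof -
  let ?y = "\<lambda>t w. coord pr w + (if w = c then t else 0)"
  have "((\<lambda>t. eval_qpoly (?y t) (sqdist_qpoly (edge z))) has_real_derivative 2 * rig_row pr (edge z) c) (at 0)"
    if "z \<in> qvars P" for z
  proof -
    obtain u v where uv: "edge z = (u, v)" by fastforce
    then show ?thesis
      using has_real_derivative_sqdist_qpoly[of u v pr c] loopfree[OF that] by simp
  qed
  then have "(\<Sum>z\<in>qvars P. eval_qpoly (\<lambda>z. eval_qpoly (?y 0) (sqdist_qpoly (edge z))) (qpderiv z P)
      * (2 * rig_row pr (edge z) c)) = 0"
    by (rule qpderiv_combination_eq_0_if_relation[OF rel])
  moreover have "?y 0 = coord pr" by (simp add: fun_eq_iff)
  ultimately show ?thesis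
    by (simp add: ac_simps)
qed

lemma not_alg_indep_set_obtains_minimal_relation:
  assumes "\<not> alg_indep_set D"
  obtains P where "qvars P \<subseteq> D" "eval_qpoly (\<lambda>z. z) P = 0" "P \<noteq> 0"
    and "\<And>Q. qvars Q \<subseteq> D \<Longrightarrow> eval_qpoly (\<lambda>z. z) Q = 0 \<Longrightarrow> Q \<noteq> 0 \<Longrightarrow> tdeg P \<le> tdeg Q"
proof -
  let ?rel = "\<lambda>Q. qvars Q \<subseteq> D \<and> eval_qpoly (\<lambda>z. z) Q = 0 \<and> Q \<noteq> 0"
  have "\<exists>P. ?rel P"
    using assms unfolding alg_indep_set_def alg_indep_def qvars_def by blast
  then obtain P where "?rel P" and "\<forall>Q. ?rel Q \<longrightarrow> tdeg P \<le> tdeg Q"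
    using ex_has_least_nat[of ?rel _ tdeg] by blast
  with that show ?thesis by blast
qed

lemma edge_lengths_alg_indep:
  fixes pr :: "'v \<Rightarrow> real \<times> real" and p0 :: "'v \<Rightarrow> complex \<times> complex"
  assumes F: "graph V F" and gr: "generic_real V pr" and g0: "generic V p0"
    and ind: "rig_rows_indep pr F"
  shows "alg_indep_set ((\<lambda>e. eval_qpoly (coord p0) (sqdist_qpoly e)) ` F)"
proof (rule ccontr)
  define dv where "dv e = eval_qpoly (coord p0) (sqdist_qpoly e)" for e
  define D where "D = dv ` F"
  let ?e = "eval_qpoly (\<lambda>z::complex. z)"
  have "finite F" "F \<subseteq> V \<times> V" and loopfree: "\<And>u v. (u, v) \<in> F \<Longrightarrow> u \<noteq> v"
    using F unfolding graph_def by (auto intro: finite_subset)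
  assume "\<not> alg_indep_set ((\<lambda>e. eval_qpoly (coord p0) (sqdist_qpoly e)) ` F)"
  then have "\<not> alg_indep_set D"
    by (simp add: D_def dv_def)
  then obtain P where P: "qvars P \<subseteq> D" "?e P = 0" "P \<noteq> 0"
    and P_min: "\<And>Q. qvars Q \<subseteq> D \<Longrightarrow> ?e Q = 0 \<Longrightarrow> Q \<noteq> 0 \<Longrightarrow> tdeg P \<le> tdeg Q"
    using not_alg_indep_set_obtains_minimal_relation by blast
  text \<open>Pull the relations back to the coordinates by choosing, for each edge length, an edge.\<close>
  define edge where "edge z = (SOME e. e \<in> F \<and> dv e = z)" for z
  have edge: "edge z \<in> F" "dv (edge z) = z" if "z \<in> D" for z
    using someI_ex[of "\<lambda>e. e \<in> F \<and> dv e = z"] that unfolding edge_def D_def by auto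
  define \<sigma> where "\<sigma> z = sqdist_qpoly (edge z)" for z
  have vars_\<sigma>: "qvars (\<sigma> z) \<subseteq> V \<times> UNIV" if "z \<in> D" for z
    using qvars_sqdist_qpoly[of "edge z"] edge(1)[OF that] \<open>F \<subseteq> V \<times> V\<close>
    unfolding \<sigma>_def by (cases "edge z") auto
  have at_p0: "eval_qpoly (\<lambda>z. eval_qpoly (coord p0) (\<sigma> z)) Q = ?e Q" if "qvars Q \<subseteq> D" for Q
    by (rule eval_qpoly_cong) (use that edge in \<open>auto simp: \<sigma>_def dv_def\<close>)
  have vars_P: "qvars (\<sigma> z) \<subseteq> V \<times> UNIV" if "z \<in> qvars P" for z
    using vars_\<sigma> P(1) that by blast
  have rel_p0: "eval_qpoly (\<lambda>z. eval_qpoly (coord p0) (\<sigma> z)) P = 0"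
    using at_p0[OF P(1)] P(2) by simp
  let ?v = "\<lambda>z. eval_qpoly (coord pr) (\<sigma> z)"
  define a where "a z = 2 * eval_qpoly ?v (qpderiv z P)" for z
  have "eval_qpoly (\<lambda>z. eval_qpoly y (sqdist_qpoly (edge z))) P = 0" for y :: "'v \<times> bool \<Rightarrow> real"
    using alg_indep_qsubst_relation[OF g0[unfolded generic_def] vars_P rel_p0] by (simp add: \<sigma>_def)
  moreover have "fst (edge z) \<noteq> snd (edge z)" if "z \<in> qvars P" for z
    using loopfree edge(1) that P(1) by (metis prod.collapse subsetD)
  ultimately have grad: "(\<Sum>z\<in>qvars P. a z * rig_row pr (edge z) c) = 0" for c
    unfolding a_def \<sigma>_def by (rule rig_row_combination_of_sqdist_relation)
  have inj: "inj_on edge (qvars P)"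
    by (rule inj_onI) (metis P(1) edge(2) subsetD)
  have img: "edge ` qvars P \<subseteq> F"
    using edge(1) P(1) by blast
  have vanish: "qpderiv z P = 0" if z: "z \<in> qvars P" for z
  proof (rule ccontr)
    assume nz: "qpderiv z P \<noteq> 0"
    have "a z = 0"
      by (rule rig_rows_indep_reindex[OF ind \<open>finite F\<close> inj img grad z])
    then have rel_pr: "eval_qpoly (\<lambda>z. eval_qpoly (coord pr) (\<sigma> z)) (qpderiv z P) = 0"
      by (simp add: a_def)
    have vars: "qvars (qpderiv z P) \<subseteq> D"
      using qvars_qpderiv[of z P] P(1) by blast
    then have "\<And>z'. z' \<in> qvars (qpderiv z P) \<Longrightarrow> qvars (\<sigma> z') \<subseteq> V \<times> UNIV"
      using vars_\<sigma> by blast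
    then have "?e (qpderiv z P) = 0"
      using alg_indep_qsubst_relation[OF gr[unfolded generic_real_def] _ rel_pr, of "coord p0"]
        at_p0[OF vars] by simp
    then have "tdeg P \<le> tdeg (qpderiv z P)"
      using P_min[OF vars _ nz] by simp
    with tdeg_qpderiv_less[OF nz] show False by simp
  qed
  have "qpderiv z P = 0" for z
    using vanish qpderiv_eq_0_if_not_qvar by (cases "z \<in> qvars P") simp_all
  then show False
    using eval_qpoly_neq_0_if_qpderivs_0 P(2,3) by blast
qed

lemma rigid_obtains_indep_rows:
  assumes G: "graph V E" and "rigid V E"
  obtains pr F where "generic_real V pr" "F \<subseteq> E" "rig_rows_indep pr F" "card F = 2 * card V - 3"
proof -
  obtain pr where gr: "generic_real V pr" and rk: "rig_rank E pr = 2 * card V - 3"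
    using assms(2) unfolding rigid_def by blast
  define ranks where "ranks = {card F | F. F \<subseteq> E \<and> rig_rows_indep pr F}"
  have "finite E"
    using G unfolding graph_def by (meson finite_SigmaI finite_subset)
  then have "finite ranks"
    unfolding ranks_def by (rule finite_subset[rotated, OF finite_imageI[OF finite_Pow_iff[THEN iffD2]]]) auto
  moreover have "ranks \<noteq> {}"
    unfolding ranks_def rig_rows_indep_def by (auto intro!: exI[of _ "{}"])
  ultimately have "rig_rank E pr \<in> ranks"
    unfolding rig_rank_def ranks_def rig_rows_indep_def[symmetric] by (rule Max_in)
  then show ?thesis
    using that gr rk unfolding ranks_def by auto
qed

lemma quasi_generic_edge_lengths_alg_indep:
  assumes G: "graph V E" and "rigid V E" and "quasi_generic V p"
  obtains D where "finite D" "D \<subseteq> dG E p" "alg_indep_set D" "card D = 2 * card V - 3"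
proof -
  obtain pr F where gr: "generic_real V pr" and FE: "F \<subseteq> E" and ind: "rig_rows_indep pr F"
    and card_F: "card F = 2 * card V - 3"
    using rigid_obtains_indep_rows[OF G assms(2)] by blast
  obtain p0 where g0: "generic V p0" and cong: "congruent_rlz V p p0"
    using assms(3) unfolding quasi_generic_def by blast
  have GF: "graph V F"
    using G FE unfolding graph_def by blast
  then have "finite F"
    unfolding graph_def by (meson finite_SigmaI finite_subset)
  define D where "D = (\<lambda>e. eval_qpoly (coord p0) (sqdist_qpoly e)) ` F"
  have sub: "D \<subseteq> dG E p"
  proof
    fix d assume "d \<in> D"
    then obtain u v where uv: "(u, v) \<in> F" "d = eval_qpoly (coord p0) (sqdist_qpoly (u, v))"
      unfolding D_def by auto
    then have "u \<in> V" "v \<in> V" using FE G unfolding graph_def by blast+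
    then have "d = dsq (cdiff (p u) (p v))"
      using cong uv(2) unfolding congruent_rlz_def by (simp add: eval_sqdist_qpoly_coord)
    then show "d \<in> dG E p"
      unfolding dG_def using uv(1) FE by (intro image_eqI[of _ _ "(u, v)"]) auto
  qed
  have "card D = 2 * card V - 3"
    unfolding D_def using edge_lengths_inj_on[OF GF g0 ind] card_F by (simp add: card_image)
  moreover have "finite D"
    unfolding D_def using \<open>finite F\<close> by simp
  ultimately show ?thesis
    using that sub edge_lengths_alg_indep[OF GF gr g0 ind] unfolding D_def by blast
qed

subsection \<open>Pinned realisations\<close>

lemma card_nonzero_coords_pinned:
  assumes "finite V" "v1 \<in> V" "v2 \<in> V" "v1 \<noteq> v2" "r v1 = (0, 0)" "r v2 = (0, w)"
  shows "card (coords V r - {0}) \<le> 2 * card V - 3"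
proof -
  define Z where "Z = {(v1, False), (v1, True), (v2, False)}"
  have ZV: "Z \<subseteq> V \<times> UNIV" using assms(2,3) by (auto simp: Z_def)
  have "coords V r - {0} \<subseteq> coord r ` (V \<times> UNIV - Z)"
    using assms(5,6) by (auto simp: coords_def Z_def coord_def)
  then have "card (coords V r - {0}) \<le> card (coord r ` (V \<times> UNIV - Z))"
    by (rule card_mono[rotated]) (use assms(1) in simp)
  also have "\<dots> \<le> card (V \<times> (UNIV :: bool set) - Z)"
    by (rule card_image_le) (use assms(1) in simp)
  also have "\<dots> = 2 * card V - 3"
    using card_Diff_subset[OF finite_subset[OF ZV] ZV] assms(1,4)
    by (simp add: Z_def card_cartesian_product mult.commute)
  finally show ?thesis .
qed

lemma field_gen_remove_0: "field_gen (S - {0}) = field_gen S"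
proof
  show "field_gen (S - {0}) \<subseteq> field_gen S" by (rule field_gen_mono) blast
  have "S \<subseteq> field_gen (S - {0})"
    using field_gen_superset[of "S - {0}"] is_subfield_0[OF is_subfield_field_gen] by blast
  then show "field_gen S \<subseteq> field_gen (S - {0})"
    by (rule field_gen_least[OF is_subfield_field_gen])
qed

lemma dG_subset_field_gen_coords:
  assumes "E \<subseteq> V \<times> V"
  shows "dG E r \<subseteq> field_gen (coords V r)"
proof
  fix d assume "d \<in> dG E r"
  then obtain u v where uv: "(u, v) \<in> E" "d = dsq (cdiff (r u) (r v))"
    unfolding dG_def by auto
  have "coord r (x, b) \<in> field_gen (coords V r)" if "x \<in> V" for x b
    using that field_gen_superset[of "coords V r"] by (auto simp: coords_def)
  then have "fst (r x) \<in> field_gen (coords V r)" "snd (r x) \<in> field_gen (coords V r)" if "x \<in> V" for x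
    using that by (metis coord_def fst_conv snd_conv)+
  with uv assms show "d \<in> field_gen (coords V r)"
    unfolding dsq_def cdiff_def
    by (auto intro!: is_subfield_add is_subfield_diff is_subfield_power is_subfield_field_gen)
qed

lemma equivalent_imp_dG_eq: "equivalent E p r \<Longrightarrow> dG E p = dG E r"
  unfolding equivalent_def dG_def by (force simp: image_def)

lemma pinned_realisation_transcendence_basis:
  assumes G: "graph V E" and "v1 \<in> V" "v2 \<in> V" "v1 \<noteq> v2"
    and eq: "equivalent E p r" and "r v1 = (0, 0)" "r v2 = (0, w)"
    and D: "finite D" "D \<subseteq> dG E p" "alg_indep_set D" "card D = 2 * card V - 3"
  shows "alg_closure (field_gen (coords V r)) = alg_closure (field_gen (dG E p))
       \<and> trdeg (field_gen (coords V r)) = enat (2 * card V - 3)"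
proof -
  have "finite V" "E \<subseteq> V \<times> V" using G unfolding graph_def by auto
  have fin: "finite (coords V r - {0})"
    using \<open>finite V\<close> by (simp add: coords_def)
  have card: "card (coords V r - {0}) \<le> 2 * card V - 3"
    by (rule card_nonzero_coords_pinned[OF \<open>finite V\<close> assms(2-4,6,7)])
  have sub: "field_gen (dG E p) \<subseteq> field_gen (coords V r - {0})"
    unfolding field_gen_remove_0 equivalent_imp_dG_eq[OF eq]
    by (rule field_gen_least[OF is_subfield_field_gen dG_subset_field_gen_coords[OF \<open>E \<subseteq> V \<times> V\<close>]])
  have "D \<subseteq> field_gen (dG E p)"
    using D(2) field_gen_superset by blast
  from field_gen_transcendence_basis[OF fin card is_subfield_field_gen sub D(1) this D(3,4)]
  show ?thesis
    unfolding field_gen_remove_0 .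
qed

theorem lemma5p5:
  fixes V :: "'v set" and E :: "('v \<times> 'v) set" and n :: nat
    and v1 v2 :: 'v and p q :: "'v \<Rightarrow> complex \<times> complex" and y z :: complex
  assumes "graph V E" and "rigid V E"
    and "card V = n" and "n \<ge> 3"
    and "v1 \<in> V" and "v2 \<in> V" and "v1 \<noteq> v2"
    and "quasi_generic V p" and "p v1 = (0, 0)" and "p v2 = (0, y)"
    and "equivalent E p q" and "q v1 = (0, 0)" and "q v2 = (0, z)"
  shows "alg_closure (field_gen (coords V p)) = alg_closure (field_gen (coords V q))
       \<and> alg_closure (field_gen (coords V q)) = alg_closure (field_gen (dG E p))
       \<and> trdeg (field_gen (coords V q)) = enat (2 * n - 3)"
proof -
  obtain D where D: "finite D" "D \<subseteq> dG E p" "alg_indep_set D" "card D = 2 * card V - 3"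
    using quasi_generic_edge_lengths_alg_indep[OF assms(1,2,8)] by blast
  have "equivalent E p p"
    by (simp add: equivalent_def)
  then have "alg_closure (field_gen (coords V p)) = alg_closure (field_gen (dG E p))"
    using pinned_realisation_transcendence_basis[OF assms(1,5,6,7) _ assms(9,10) D] by blast
  moreover have "alg_closure (field_gen (coords V q)) = alg_closure (field_gen (dG E p))
      \<and> trdeg (field_gen (coords V q)) = enat (2 * card V - 3)"
    by (rule pinned_realisation_transcendence_basis[OF assms(1,5,6,7,11,12,13) D])
  ultimately show ?thesis
    using assms(3) by simp
qed

end
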